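(* Let $(M,\Sigma_M,\mu,T)$ be a Bernoulli system, where $(M,d_M)$ is a separable metric space and $\Sigma_M$ contains all open balls of $(M,d_M)$. Then for every $\varepsilon>0$ there is an irreducible and aperiodic Markov process, with outcome space a finite subset of $M$, such that $(M,\Sigma_M,\mu,T)$ is $\varepsilon$-congruent to (the deterministic representation of) this Markov process.
   Context: A deterministic system is a quadruple $(M,\Sigma_M,\mu,T)$ where $(M,\Sigma_M,\mu)$ is a probability space and $T:M\to M$ is a bijection with $T,T^{-1}$ measurable; measure-preserving means $\mu(T(A))=\mu(A)$ for all $A\in\Sigma_M$. A Bernoulli process is a stochastic process $\{Z_t;t\in\mathbb{Z}\}$ with finite outcome space $\{s_1,\dots,s_N\}$ (power-set $\sigma$-algebra), $P\{Z_t=s_k\}=p_k$ for all $t,k$, and the $Z_t$ independent. The deterministic representation of a process $\{Z_t\}$ with values in $(\bar M,\Sigma_{\bar M})$ is $(M_2,\Sigma_{M_2},\mu_2,T_2,\Phi_0)$: $M_2$ is the set of bi-infinite sequences over $\bar M$, $\Sigma_{M_2}$ is generated by cylinder sets $\{m:m_{i_1}\in A_1,\dots,m_{i_n}\in A_n\}$, $\mu_2$ is the unique measure giving each cylinder probability $P\{Z_{i_1}\in A_1,\dots,Z_{i_n}\in A_n\}$, $T_2$ is the left shift, $\Phi_0(m)=m_0$. The deterministic representation of a Bernoulli process is a Bernoulli shift. Two measure-preserving systems are isomorphic if there are full-measure measurable subsets $\hat M_1,\hat M_2$ with $T_i\hat M_i\subseteq\hat M_i$ and a bijection $\phi:\hat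 M_1\to\hat M_2$ such that $\phi,\phi^{-1}$ preserve measurability, $\phi$ preserves measure, and $\phi\circ T_1=T_2\circ\phi$ on $\hat M_1$. A Bernoulli system is a measure-preserving system isomorphic to a Bernoulli shift. A Markov process is a stationary process with finite outcome space $\{s_1,\dots,s_N\}$ such that $P\{Z_{t+1}=s_j\mid Z_t,Z_{t-1},\dots,Z_k\}=P\{Z_{t+1}=s_j\mid Z_t\}$ for all $t$, $k\le t$, $j$. With $P^k(s_i,s_j):=P\{Z_{n+k}=s_i\mid Z_n=s_j\}$, it is irreducible if for all $i,j$ there is $k\in\mathbb{N}$ with $P^k(s_i,s_j)>0$, and aperiodic if for each $i$, $\gcd\{n\ge1: P^n(s_i,s_i)>0\}=1$. $(M,\Sigma_M,\mu,T)$ is $\varepsilon$-congruent to the deterministic representation $(M_2,\Sigma_{M_2},\mu_2,T_2,\Phi_0)$ of a stationary process with values in $M$ if it is isomorphic to $(M_2,\Sigma_{M_2},\mu_2,T_2)$ via some $\phi$ and $d_M(m,\Phi_0(\phi(m)))<\varepsilon$ for all $m$ outside a set of $\mu$-measure $<\varepsilon$. *)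

theory Defs
  imports "HOL-Probability.Probability"
begin

definition mp_system :: "'a measure \<Rightarrow> ('a \<Rightarrow> 'a) \<Rightarrow> bool" where
  "mp_system M T \<longleftrightarrow> prob_space M \<and> bij_betw T (space M) (space M)
     \<and> T \<in> M \<rightarrow>\<^sub>M M \<and> the_inv_into (space M) T \<in> M \<rightarrow>\<^sub>M M
     \<and> (\<forall>A\<in>sets M. emeasure M (T ` A) = emeasure M A)"

definition mp_isomorphic_via ::
  "'a measure \<Rightarrow> ('a \<Rightarrow> 'a) \<Rightarrow> 'b measure \<Rightarrow> ('b \<Rightarrow> 'b) \<Rightarrow> ('a \<Rightarrow> 'b) \<Rightarrow> bool" where
  "mp_isomorphic_via M1 T1 M2 T2 \<phi> \<longleftrightarrow> (\<exists>H1 H2.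
      H1 \<in> sets M1 \<and> H2 \<in> sets M2
    \<and> emeasure M1 (space M1 - H1) = 0 \<and> emeasure M2 (space M2 - H2) = 0
    \<and> T1 ` H1 \<subseteq> H1 \<and> T2 ` H2 \<subseteq> H2
    \<and> bij_betw \<phi> H1 H2
    \<and> (\<forall>A\<in>sets M1. A \<subseteq> H1 \<longrightarrow> \<phi> ` A \<in> sets M2)
    \<and> (\<forall>B\<in>sets M2. B \<subseteq> H2 \<longrightarrow> {x\<in>H1. \<phi> x \<in> B} \<in> sets M1)
    \<and> (\<forall>A\<in>sets M1. A \<subseteq> H1 \<longrightarrow> emeasure M2 (\<phi> ` A) = emeasure M1 A)
    \<and> (\<forall>x\<in>H1. \<phi> (T1 x) = T2 (\<phi> x)))"

definition finite_process :: "'w measure \<Rightarrow> (int \<Rightarrow> 'w \<Rightarrow> 'b) \<Rightarrow> 'b set \<Rightarrow> bool" where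
  "finite_process P Z S \<longleftrightarrow> prob_space P \<and> finite S \<and> S \<noteq> {}
     \<and> (\<forall>t. Z t \<in> P \<rightarrow>\<^sub>M count_space S)"

definition seq_space :: "'b set \<Rightarrow> (int \<Rightarrow> 'b) measure" where
  "seq_space S = (\<Pi>\<^sub>M i\<in>(UNIV::int set). count_space S)"

definition cylinder :: "'b set \<Rightarrow> int set \<Rightarrow> (int \<Rightarrow> 'b set) \<Rightarrow> (int \<Rightarrow> 'b) set" where
  "cylinder S I A = {m \<in> space (seq_space S). \<forall>i\<in>I. m i \<in> A i}"

definition shift :: "(int \<Rightarrow> 'b) \<Rightarrow> (int \<Rightarrow> 'b)" where
  "shift m = (\<lambda>i. m (i + 1))"

text \<open>N is (the measure of) the deterministic representation of the process Z:
  it lives on the sequence space and gives each cylinder the corresponding probability.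
  (Such a measure is unique.)  The map is the left shift and Phi_0 m = m 0.\<close>
definition det_rep :: "'w measure \<Rightarrow> (int \<Rightarrow> 'w \<Rightarrow> 'b) \<Rightarrow> 'b set \<Rightarrow> (int \<Rightarrow> 'b) measure \<Rightarrow> bool" where
  "det_rep P Z S N \<longleftrightarrow> sets N = sets (seq_space S)
     \<and> (\<forall>I A. finite I \<longrightarrow> (\<forall>i\<in>I. A i \<subseteq> S) \<longrightarrow>
          emeasure N (cylinder S I A) = emeasure P {\<omega>\<in>space P. \<forall>i\<in>I. Z i \<omega> \<in> A i})"

definition bernoulli_process :: "'w measure \<Rightarrow> (int \<Rightarrow> 'w \<Rightarrow> 'b) \<Rightarrow> 'b set \<Rightarrow> bool" where
  "bernoulli_process P Z S \<longleftrightarrow> finite_process P Z S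
     \<and> (\<exists>p. \<forall>t. \<forall>s\<in>S. measure P {\<omega>\<in>space P. Z t \<omega> = s} = p s)
     \<and> prob_space.indep_vars P (\<lambda>_. count_space S) Z UNIV"

definition stationary_process :: "'w measure \<Rightarrow> (int \<Rightarrow> 'w \<Rightarrow> 'b) \<Rightarrow> 'b set \<Rightarrow> bool" where
  "stationary_process P Z S \<longleftrightarrow> finite_process P Z S
     \<and> (\<forall>I A k. finite I \<longrightarrow>
          measure P {\<omega>\<in>space P. \<forall>i\<in>I. Z (i + k) \<omega> \<in> A i}
        = measure P {\<omega>\<in>space P. \<forall>i\<in>I. Z i \<omega> \<in> A i})"

definition markov_process :: "'w measure \<Rightarrow> (int \<Rightarrow> 'w \<Rightarrow> 'b) \<Rightarrow> 'b set \<Rightarrow> bool" where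
  "markov_process P Z S \<longleftrightarrow> stationary_process P Z S
     \<and> (\<forall>t k x s. k \<le> t \<longrightarrow> s \<in> S \<longrightarrow> (\<forall>i. x i \<in> S) \<longrightarrow>
          (let C = {\<omega>\<in>space P. \<forall>i\<in>{k..t}. Z i \<omega> = x i};
               D = {\<omega>\<in>space P. Z t \<omega> = x t};
               E = {\<omega>\<in>space P. Z (t + 1) \<omega> = s}
           in measure P C > 0 \<longrightarrow>
              measure P (E \<inter> C) / measure P C = measure P (E \<inter> D) / measure P D))"

text \<open>k-step transition probability P^k(s, s') = P{Z_(n+k) = s | Z_n = s'} (taken at n = 0;
  it does not depend on n by stationarity).\<close>
definition trans_prob :: "'w measure \<Rightarrow> (int \<Rightarrow> 'w \<Rightarrow> 'b) \<Rightarrow> nat \<Rightarrow> 'b \<Rightarrow> 'b \<Rightarrow> real" where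
  "trans_prob P Z k s s' =
     measure P {\<omega>\<in>space P. Z (int k) \<omega> = s \<and> Z 0 \<omega> = s'} / measure P {\<omega>\<in>space P. Z 0 \<omega> = s'}"

definition irreducible_proc :: "'w measure \<Rightarrow> (int \<Rightarrow> 'w \<Rightarrow> 'b) \<Rightarrow> 'b set \<Rightarrow> bool" where
  "irreducible_proc P Z S \<longleftrightarrow> (\<forall>s\<in>S. \<forall>s'\<in>S. \<exists>k::nat. k \<ge> 1 \<and> trans_prob P Z k s s' > 0)"

definition aperiodic_proc :: "'w measure \<Rightarrow> (int \<Rightarrow> 'w \<Rightarrow> 'b) \<Rightarrow> 'b set \<Rightarrow> bool" where
  "aperiodic_proc P Z S \<longleftrightarrow> (\<forall>s\<in>S. Gcd {n::nat. n \<ge> 1 \<and> trans_prob P Z n s s > 0} = 1)"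

definition eps_congruent ::
  "'a measure \<Rightarrow> ('a \<Rightarrow> 'a) \<Rightarrow> ('a \<Rightarrow> 'a \<Rightarrow> real) \<Rightarrow> (int \<Rightarrow> 'a) measure \<Rightarrow> real \<Rightarrow> bool" where
  "eps_congruent M T d N \<epsilon> \<longleftrightarrow> (\<exists>\<phi>. mp_isomorphic_via M T N shift \<phi>
      \<and> (\<exists>E\<in>sets M. measure M E < \<epsilon> \<and> (\<forall>m\<in>space M - E. d m (\<phi> m 0) < \<epsilon>)))"

end

theory Submission
  imports Defs
begin

text \<open>Through the isomorphism \<psi>, M is a copy of the Bernoulli shift. Separability yields finitely
  many measurable cells of diameter < \<epsilon> covering M up to measure \<epsilon>/2. The images of the cells are
  approximated in the shift by events that only depend on the coordinates in a window [-n, n], and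
  every window pattern w read in the approximation of a cell is sent to a point g w of that cell,
  injectively. The sliding block code sending x to the sequence of the g-images of its windows
  [i - n, i + n] maps the shift to a process with finitely many values in M. It is Markov, since consecutive windows overlap in all
  but one fresh independent letter; irreducible and aperiodic, since windows more than 2n apart are
  independent; and, g being injective, the coding is an isomorphism. Finally the time-0 value
  g (\<psi> m)|[-n,n] of the image of m lies in the cell of m, except on a set of measure < \<epsilon>.\<close>

section \<open>Events on the sequence space determined by finitely many coordinates\<close>

lemma space_seq_space: "space (seq_space S) = {x. \<forall>i. x i \<in> S}"
  by (auto simp: seq_space_def space_PiM PiE_def extensional_def)

lemma measurable_coordinate: "(\<lambda>x. x i) \<in> seq_space S \<rightarrow>\<^sub>M count_space S"
  unfolding seq_space_def by (rule measurable_component_singleton) simp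

lemma coordinate_event_in_sets: "{x\<in>space (seq_space S). x i \<in> A} \<in> sets (seq_space S)"
proof -
  have "{x\<in>space (seq_space S). x i \<in> A} = (\<lambda>x. x i) -` (A \<inter> S) \<inter> space (seq_space S)"
    by (auto simp: space_seq_space)
  also have "\<dots> \<in> sets (seq_space S)" by (rule measurable_sets[OF measurable_coordinate]) simp
  finally show ?thesis .
qed

lemma point_cylinder_in_sets:
  "finite J \<Longrightarrow> {x\<in>space (seq_space S). \<forall>i\<in>J. x i = u i} \<in> sets (seq_space S)"
proof (induction J rule: finite_induct)
  case (insert j J)
  have "{x\<in>space (seq_space S). \<forall>i\<in>insert j J. x i = u i}
     = {x\<in>space (seq_space S). x j \<in> {u j}} \<inter> {x\<in>space (seq_space S). \<forall>i\<in>J. x i = u i}" by auto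
  also have "\<dots> \<in> sets (seq_space S)" by (rule sets.Int[OF coordinate_event_in_sets insert.IH])
  finally show ?case .
qed simp

definition determined_by :: "'b set \<Rightarrow> int set \<Rightarrow> (int \<Rightarrow> 'b) set \<Rightarrow> bool" where
  "determined_by S J F \<longleftrightarrow> F \<subseteq> space (seq_space S) \<and>
     (\<forall>x\<in>space (seq_space S). \<forall>y\<in>space (seq_space S).
        (\<forall>i\<in>J. x i = y i) \<longrightarrow> x \<in> F \<longrightarrow> y \<in> F)"

lemma determined_byI:
  assumes "F \<subseteq> space (seq_space S)"
    and "\<And>x y. x \<in> space (seq_space S) \<Longrightarrow> y \<in> space (seq_space S) \<Longrightarrow>
           \<forall>i\<in>J. x i = y i \<Longrightarrow> x \<in> F \<Longrightarrow> y \<in> F"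
  shows "determined_by S J F"
  unfolding determined_by_def using assms(1) by (auto intro: assms(2))

lemma determined_by_iff:
  assumes "determined_by S J F" "x \<in> space (seq_space S)" "y \<in> space (seq_space S)" "\<forall>i\<in>J. x i = y i"
  shows "x \<in> F \<longleftrightarrow> y \<in> F"
proof -
  have "\<forall>i\<in>J. y i = x i" using assms(4) by simp
  then show ?thesis using assms unfolding determined_by_def by blast
qed

lemma determined_by_subset_space: "determined_by S J F \<Longrightarrow> F \<subseteq> space (seq_space S)"
  unfolding determined_by_def by blast

lemma determined_by_mono: "determined_by S J F \<Longrightarrow> J \<subseteq> J' \<Longrightarrow> determined_by S J' F"
  unfolding determined_by_def by blast

lemma determined_by_empty: "determined_by S J {}"
  unfolding determined_by_def by blast

lemma determined_by_Diff:
  assumes "determined_by S J F" "determined_by S J G"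
  shows "determined_by S J (F - G)"
proof (rule determined_byI)
  show "F - G \<subseteq> space (seq_space S)" using determined_by_subset_space[OF assms(1)] by blast
  fix x y assume xy: "x \<in> space (seq_space S)" "y \<in> space (seq_space S)" "\<forall>i\<in>J. x i = y i"
    and "x \<in> F - G"
  then show "y \<in> F - G"
    using determined_by_iff[OF assms(1) xy] determined_by_iff[OF assms(2) xy] by blast
qed

lemma determined_by_space: "determined_by S J (space (seq_space S))"
  unfolding determined_by_def by blast

lemma determined_by_compl: "determined_by S J F \<Longrightarrow> determined_by S J (space (seq_space S) - F)"
  by (rule determined_by_Diff[OF determined_by_space])

lemma determined_by_UN:
  assumes "\<And>k. k \<in> K \<Longrightarrow> determined_by S J (F k)"
  shows "determined_by S J (\<Union>k\<in>K. F k)"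
proof (rule determined_byI)
  show "(\<Union>k\<in>K. F k) \<subseteq> space (seq_space S)" using assms determined_by_subset_space by blast
  fix x y assume xy: "x \<in> space (seq_space S)" "y \<in> space (seq_space S)" "\<forall>i\<in>J. x i = y i"
    and "x \<in> (\<Union>k\<in>K. F k)"
  then show "y \<in> (\<Union>k\<in>K. F k)" using determined_by_iff[OF assms _ _ _, OF _ xy] by blast
qed

lemma determined_by_Un:
  assumes "determined_by S J F" "determined_by S J G"
  shows "determined_by S J (F \<union> G)"
proof (rule determined_byI)
  show "F \<union> G \<subseteq> space (seq_space S)" using assms determined_by_subset_space by blast
  fix x y assume xy: "x \<in> space (seq_space S)" "y \<in> space (seq_space S)" "\<forall>i\<in>J. x i = y i"
    and "x \<in> F \<union> G"
  then show "y \<in> F \<union> G"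
    using determined_by_iff[OF assms(1) xy] determined_by_iff[OF assms(2) xy] by blast
qed

lemma determined_by_cylinder: "determined_by S J (cylinder S J A)"
  unfolding determined_by_def cylinder_def by auto

lemma determined_by_fun:
  assumes "\<And>x y. \<forall>l\<in>J. x l = y l \<Longrightarrow> h x = h y"
  shows "determined_by S J {x\<in>space (seq_space S). Q (h x)}"
  unfolding determined_by_def
proof safe
  fix x y assume "\<forall>l\<in>J. x l = y l" "Q (h x)"
  then show "Q (h y)" using assms[of x y] by simp
qed

lemma determined_by_restrict:
  assumes "determined_by S J F" "x \<in> F" "y \<in> space (seq_space S)" "restrict x J = restrict y J"
  shows "y \<in> F"
proof -
  have "\<forall>i\<in>J. x i = y i" using assms(4) by (metis restrict_apply')
  moreover have "x \<in> space (seq_space S)" using assms(1,2) determined_by_subset_space by blast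
  ultimately show ?thesis using determined_by_iff[OF assms(1) _ assms(3)] assms(2) by simp
qed

text \<open>Over a finite alphabet such an event is a finite union of point cylinders.\<close>
lemma determined_by_in_sets:
  assumes "finite S" "finite J" "determined_by S J F"
  shows "F \<in> sets (seq_space S)"
proof -
  let ?R = "(\<lambda>x. restrict x J) ` F"
  have fin: "finite ?R"
  proof (rule finite_subset)
    show "?R \<subseteq> PiE J (\<lambda>_. S)"
      using determined_by_subset_space[OF assms(3)] by (auto simp: space_seq_space)
  qed (use assms in \<open>simp add: finite_PiE\<close>)
  have "F = (\<Union>u\<in>?R. {x\<in>space (seq_space S). \<forall>i\<in>J. x i = u i})"
  proof
    show "F \<subseteq> (\<Union>u\<in>?R. {x\<in>space (seq_space S). \<forall>i\<in>J. x i = u i})"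
      using determined_by_subset_space[OF assms(3)] by auto
    show "(\<Union>u\<in>?R. {x\<in>space (seq_space S). \<forall>i\<in>J. x i = u i}) \<subseteq> F"
    proof safe
      fix x y assume "x \<in> F" "y \<in> space (seq_space S)" "\<forall>i\<in>J. y i = restrict x J i"
      then show "y \<in> F"
        using assms(3) determined_by_subset_space[OF assms(3)] unfolding determined_by_def
        by (metis restrict_apply' subsetD)
    qed
  qed
  also have "\<dots> \<in> sets (seq_space S)"
    by (rule sets.finite_UN[OF fin]) (rule point_cylinder_in_sets[OF assms(2)])
  finally show ?thesis .
qed

lemma finite_subset_symmetric_interval: "finite J \<Longrightarrow> \<exists>m::nat. J \<subseteq> {- int m..int m}"
proof -
  assume J: "finite J"
  define m where "m = (\<Sum>j\<in>J. nat \<bar>j\<bar>)"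
  have "nat \<bar>j\<bar> \<le> m" if "j \<in> J" for j unfolding m_def using J that by (intro member_le_sum) auto
  then have "J \<subseteq> {- int m..int m}" by force
  then show ?thesis by blast
qed


section \<open>The Bernoulli shift\<close>

locale bernoulli_shift =
  fixes P :: "'w measure" and Z :: "int \<Rightarrow> 'w \<Rightarrow> 'b" and S :: "'b set" and NB :: "(int \<Rightarrow> 'b) measure"
  assumes bernoulli: "bernoulli_process P Z S" and rep: "det_rep P Z S NB"
begin

definition p :: "'b \<Rightarrow> real" where "p s = measure P {\<omega>\<in>space P. Z 0 \<omega> = s}"

lemma prob_space_P: "prob_space P"
  and finite_S: "finite S"
  and measurable_Z: "Z t \<in> P \<rightarrow>\<^sub>M count_space S"
  using bernoulli by (simp_all add: bernoulli_process_def finite_process_def)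

lemma Z_in_S: "\<omega> \<in> space P \<Longrightarrow> Z t \<omega> \<in> S"
  using measurable_space[OF measurable_Z] by auto

lemma sets_NB: "sets NB = sets (seq_space S)"
  using rep by (simp add: det_rep_def)

lemma space_NB: "space NB = space (seq_space S)"
  using sets_eq_imp_space_eq[OF sets_NB] .

lemma Z_event_in_sets: "{\<omega>\<in>space P. Z t \<omega> \<in> A} \<in> sets P"
proof -
  have "{\<omega>\<in>space P. Z t \<omega> \<in> A} = Z t -` (A \<inter> S) \<inter> space P" using Z_in_S by auto
  then show ?thesis using measurable_sets[OF measurable_Z, of "A \<inter> S" t] by simp
qed

lemma measure_Z_eq: "measure P {\<omega>\<in>space P. Z t \<omega> = s} = p s"
proof (cases "s \<in> S")
  case True
  obtain q where "\<forall>t. \<forall>s\<in>S. measure P {\<omega>\<in>space P. Z t \<omega> = s} = q s"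
    using bernoulli by (auto simp: bernoulli_process_def)
  then show ?thesis using True unfolding p_def by simp
next
  case False
  then have "{\<omega>\<in>space P. Z t \<omega> = s} = {}" "{\<omega>\<in>space P. Z 0 \<omega> = s} = {}" using Z_in_S by auto
  then show ?thesis unfolding p_def by (simp only:)
qed

lemma p_nonneg: "p s \<ge> 0"
  unfolding p_def by simp

lemma p_eq_0: "s \<notin> S \<Longrightarrow> p s = 0"
proof -
  assume "s \<notin> S"
  then have "{\<omega>\<in>space P. Z 0 \<omega> = s} = {}" using Z_in_S by auto
  then show ?thesis unfolding p_def by (simp only: measure_empty)
qed

lemma measure_Z_in: "measure P {\<omega>\<in>space P. Z t \<omega> \<in> A} = (\<Sum>s\<in>A \<inter> S. p s)"
proof -
  interpret prob_space P by (rule prob_space_P)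
  have "{\<omega>\<in>space P. Z t \<omega> \<in> A} = (\<Union>s\<in>A \<inter> S. {\<omega>\<in>space P. Z t \<omega> = s})" using Z_in_S by auto
  also have "measure P \<dots> = (\<Sum>s\<in>A \<inter> S. measure P {\<omega>\<in>space P. Z t \<omega> = s})"
    by (rule finite_measure_finite_Union)
      (auto simp: finite_S disjoint_family_on_def intro: Z_event_in_sets[of t "{_}", simplified])
  finally show ?thesis by (simp add: measure_Z_eq)
qed

lemma measure_Z_joint:
  assumes "finite I"
  shows "measure P {\<omega>\<in>space P. \<forall>i\<in>I. Z i \<omega> \<in> A i} = (\<Prod>i\<in>I. \<Sum>s\<in>A i \<inter> S. p s)"
proof (cases "I = {}")
  case True
  then show ?thesis using prob_space.prob_space[OF prob_space_P] by simp
next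
  case False
  interpret prob_space P by (rule prob_space_P)
  have "indep_vars (\<lambda>_. count_space S) Z UNIV"
    using bernoulli by (simp add: bernoulli_process_def)
  then have "indep_events (\<lambda>i. {\<omega>\<in>space P. Z i \<omega> \<in> A i}) UNIV"
    by (rule indep_eventsI_indep_vars) auto
  then have "prob (\<Inter>i\<in>I. {\<omega>\<in>space P. Z i \<omega> \<in> A i})
      = (\<Prod>i\<in>I. prob {\<omega>\<in>space P. Z i \<omega> \<in> A i})"
    using False assms unfolding indep_events_def by blast
  moreover have "(\<Inter>i\<in>I. {\<omega>\<in>space P. Z i \<omega> \<in> A i}) = {\<omega>\<in>space P. \<forall>i\<in>I. Z i \<omega> \<in> A i}"
    using False by auto
  ultimately show ?thesis by (simp add: measure_Z_in)
qed

lemma measure_cylinder: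
  assumes "finite I"
  shows "measure NB (cylinder S I A) = (\<Prod>i\<in>I. \<Sum>s\<in>A i \<inter> S. p s)"
proof -
  have "cylinder S I A = cylinder S I (\<lambda>i. A i \<inter> S)"
    by (auto simp: cylinder_def space_seq_space)
  moreover have "emeasure NB (cylinder S I (\<lambda>i. A i \<inter> S))
      = emeasure P {\<omega>\<in>space P. \<forall>i\<in>I. Z i \<omega> \<in> A i \<inter> S}"
    using rep assms by (simp add: det_rep_def)
  ultimately have "measure NB (cylinder S I A) = measure P {\<omega>\<in>space P. \<forall>i\<in>I. Z i \<omega> \<in> A i \<inter> S}"
    by (simp add: measure_def)
  also have "\<dots> = (\<Prod>i\<in>I. \<Sum>s\<in>(A i \<inter> S) \<inter> S. p s)" by (rule measure_Z_joint[OF assms])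
  finally show ?thesis by (simp add: Int_assoc)
qed

lemma prob_space_NB: "prob_space NB"
proof
  have "space NB = cylinder S {} (\<lambda>_. {})" by (simp add: cylinder_def space_NB)
  then have "emeasure NB (space NB) = emeasure P {\<omega>\<in>space P. \<forall>i\<in>{}. Z i \<omega> \<in> {}}"
    using rep by (simp add: det_rep_def)
  then show "emeasure NB (space NB) = 1" using prob_space.emeasure_space_1[OF prob_space_P] by simp
qed

lemma measure_point_cylinder:
  assumes "finite J"
  shows "measure NB {x\<in>space NB. \<forall>i\<in>J. x i = c i} = (\<Prod>i\<in>J. p (c i))"
proof -
  have "{x\<in>space NB. \<forall>i\<in>J. x i = c i} = cylinder S J (\<lambda>i. {c i})"
    by (auto simp: cylinder_def space_NB)
  moreover have "(\<Sum>s\<in>{c i} \<inter> S. p s) = p (c i)" for i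
    by (cases "c i \<in> S") (auto simp: p_eq_0)
  ultimately show ?thesis using measure_cylinder[OF assms] by simp
qed

lemma sum_p: "(\<Sum>s\<in>S. p s) = 1"
proof -
  have "{\<omega>\<in>space P. Z 0 \<omega> \<in> S} = space P" using Z_in_S by auto
  then have "measure P {\<omega>\<in>space P. Z 0 \<omega> \<in> S} = 1"
    using prob_space.prob_space[OF prob_space_P] by simp
  then show ?thesis by (simp add: measure_Z_in)
qed

lemma measurable_shift_by: "(\<lambda>x i. x (i + k)) \<in> NB \<rightarrow>\<^sub>M seq_space S"
proof -
  have "(\<lambda>x i. x (i + k)) \<in> seq_space S \<rightarrow>\<^sub>M seq_space S"
    unfolding seq_space_def
    by (rule measurable_PiM_single'[where f="\<lambda>i x. x (i + k)"])
      (auto intro: measurable_component_singleton simp: space_PiM PiE_iff)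
  then show ?thesis by (simp add: measurable_cong_sets[OF sets_NB refl])
qed

lemma distr_shift_by: "distr NB (seq_space S) (\<lambda>x i. x (i + k)) = NB"
proof (rule measure_eqI_PiM_infinite[where I=UNIV and M="\<lambda>_. count_space S"])
  show "sets (distr NB (seq_space S) (\<lambda>x i. x (i + k))) = sets (PiM UNIV (\<lambda>_. count_space S))"
    by (simp add: seq_space_def)
  show "sets NB = sets (PiM UNIV (\<lambda>_. count_space S))" using sets_NB by (simp add: seq_space_def)
  show "finite_measure (distr NB (seq_space S) (\<lambda>x i. x (i + k)))"
    by (rule prob_space.finite_measure[OF prob_space.prob_space_distr[OF prob_space_NB measurable_shift_by]])
  fix A J assume J: "finite J" "J \<subseteq> (UNIV::int set)" "\<And>i. i \<in> J \<Longrightarrow> A i \<in> sets (count_space S)"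
  have cyl: "prod_emb UNIV (\<lambda>_. count_space S) J (PiE J A) = cylinder S J A"
    by (auto simp: prod_emb_def cylinder_def seq_space_def space_PiM PiE_iff)
  have "cylinder S J A \<in> sets (seq_space S)"
    unfolding cyl[symmetric] seq_space_def using J by (intro sets_PiM_I) auto
  moreover have "(\<lambda>x i. x (i + k)) -` cylinder S J A \<inter> space NB
      = cylinder S ((\<lambda>i. i + k) ` J) (\<lambda>i. A (i - k))"
    by (auto simp: cylinder_def space_NB space_seq_space)
  moreover have "measure NB (cylinder S ((\<lambda>i. i + k) ` J) (\<lambda>i. A (i - k))) = measure NB (cylinder S J A)"
    using J by (simp add: measure_cylinder prod.reindex inj_on_def)
  ultimately show "emeasure (distr NB (seq_space S) (\<lambda>x i. x (i + k))) (prod_emb UNIV (\<lambda>_. count_space S) J (PiE J A))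
      = emeasure NB (prod_emb UNIV (\<lambda>_. count_space S) J (PiE J A))"
    unfolding cyl using finite_measure.emeasure_eq_measure[OF prob_space.finite_measure[OF prob_space_NB]]
    by (simp add: emeasure_distr[OF measurable_shift_by])
qed

lemma measure_shift_by_preimage:
  assumes "X \<in> sets NB"
  shows "measure NB {x\<in>space NB. (\<lambda>i. x (i + k)) \<in> X} = measure NB X"
proof -
  have "measure NB X = measure (distr NB (seq_space S) (\<lambda>x i. x (i + k))) X"
    by (simp add: distr_shift_by)
  also have "\<dots> = measure NB ((\<lambda>x i. x (i + k)) -` X \<inter> space NB)"
    using assms sets_NB by (intro measure_distr[OF measurable_shift_by]) auto
  finally show ?thesis by (simp add: vimage_def Int_def conj_commute)
qed

definition support :: "'b set" where "support = {s\<in>S. p s > 0}"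

definition typical :: "(int \<Rightarrow> 'b) set" where "typical = {x\<in>space NB. \<forall>i. x i \<in> support}"

lemma support_subset: "support \<subseteq> S"
  unfolding support_def by auto

lemma finite_support: "finite support"
  using finite_S support_subset finite_subset by blast

lemma support_nonempty: "support \<noteq> {}"
proof
  assume "support = {}"
  then have "p s = 0" if "s \<in> S" for s using that p_nonneg[of s] by (force simp: support_def)
  then show False using sum_p by simp
qed

lemma coordinate_event_NB: "{x\<in>space NB. x i \<in> A} \<in> sets NB"
  using coordinate_event_in_sets[of S i A] by (simp add: sets_NB space_NB)

lemma typical_in_sets: "typical \<in> sets NB"
proof -
  have "typical = space NB \<inter> (\<Inter>i. {x\<in>space NB. x i \<in> support})"
    by (auto simp: typical_def space_NB space_seq_space)
  then show ?thesis using coordinate_event_NB by auto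
qed

lemma atypical_null: "space NB - typical \<in> null_sets NB"
proof -
  interpret prob_space NB by (rule prob_space_NB)
  have "{x\<in>space NB. x i \<in> S - support} \<in> null_sets NB" for i
  proof -
    have "{x\<in>space NB. x i \<in> S - support} = cylinder S {i} (\<lambda>_. S - support)"
      by (auto simp: cylinder_def space_NB)
    then have "measure NB {x\<in>space NB. x i \<in> S - support} = (\<Sum>s\<in>(S - support) \<inter> S. p s)"
      by (simp add: measure_cylinder)
    also have "\<dots> = 0" by (intro sum.neutral) (auto simp: support_def intro: order.antisym p_nonneg)
    finally show ?thesis using coordinate_event_NB by (intro null_setsI) (auto simp: emeasure_eq_measure)
  qed
  moreover have "space NB - typical = (\<Union>i. {x\<in>space NB. x i \<in> S - support})"
    by (auto simp: typical_def space_NB space_seq_space)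
  ultimately show ?thesis by auto
qed

lemma measure_Int_typical: "X \<in> sets NB \<Longrightarrow> measure NB (X \<inter> typical) = measure NB X"
proof -
  assume X: "X \<in> sets NB"
  have "X \<inter> typical = X - (space NB - typical)" using sets.sets_into_space[OF X] by auto
  then show ?thesis using measure_Diff_null_set[OF X atypical_null] by simp
qed

definition approximable :: "(int \<Rightarrow> 'b) set \<Rightarrow> bool" where
  "approximable X \<longleftrightarrow>
     (\<forall>\<eta>>0. \<exists>J F. finite J \<and> determined_by S J F \<and> measure NB (sym_diff X F) < \<eta>)"

lemma determined_by_in_sets_NB: "finite J \<Longrightarrow> determined_by S J F \<Longrightarrow> F \<in> sets NB"
  using determined_by_in_sets[OF finite_S] sets_NB by auto

lemma approximable_compl:
  assumes "X \<subseteq> space NB" "approximable X"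
  shows "approximable (space NB - X)"
  unfolding approximable_def
proof (intro allI impI)
  fix \<eta> :: real assume "\<eta> > 0"
  then obtain J F where F: "finite J" "determined_by S J F" "measure NB (sym_diff X F) < \<eta>"
    using assms(2) unfolding approximable_def by blast
  have "sym_diff (space NB - X) (space NB - F) = sym_diff X F"
    using assms(1) determined_by_subset_space[OF F(2)] by (auto simp: space_NB)
  then show "\<exists>J F. finite J \<and> determined_by S J F \<and>
      measure NB ((space NB - X - F) \<union> (F - (space NB - X))) < \<eta>"
    using F determined_by_compl[OF F(2)] by (metis space_NB)
qed

lemma approximable_Un:
  assumes "X \<in> sets NB" "Y \<in> sets NB" "approximable X" "approximable Y"
  shows "approximable (X \<union> Y)"
  unfolding approximable_def
proof (intro allI impI)
  fix \<eta> :: real assume "\<eta> > 0"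
  then obtain J F J' F' where
    F: "finite J" "determined_by S J F" "measure NB (sym_diff X F) < \<eta> / 2" and
    F': "finite J'" "determined_by S J' F'" "measure NB (sym_diff Y F') < \<eta> / 2"
    using assms(3,4) unfolding approximable_def by (meson half_gt_zero)
  have sets: "F \<in> sets NB" "F' \<in> sets NB"
    using F F' determined_by_in_sets_NB by auto
  have "measure NB (sym_diff (X \<union> Y) (F \<union> F'))
      \<le> measure NB (sym_diff X F \<union> sym_diff Y F')"
    using assms sets by (intro finite_measure.finite_measure_mono[OF prob_space.finite_measure[OF prob_space_NB]]) auto
  also have "\<dots> \<le> measure NB (sym_diff X F) + measure NB (sym_diff Y F')"
    using assms sets by (intro measure_Un_le) auto
  finally have "measure NB (sym_diff (X \<union> Y) (F \<union> F')) < \<eta>"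
    using F(3) F'(3) by linarith
  moreover have "determined_by S (J \<union> J') (F \<union> F')"
    by (intro determined_by_Un determined_by_mono[OF F(2)] determined_by_mono[OF F'(2)]) auto
  ultimately show "\<exists>J F. finite J \<and> determined_by S J F \<and>
      measure NB (sym_diff (X \<union> Y) F) < \<eta>"
    using F(1) F'(1) by blast
qed

lemma approximable_UN:
  fixes A :: "nat \<Rightarrow> (int \<Rightarrow> 'b) set"
  assumes sets: "range A \<subseteq> sets NB" and approx: "\<And>i. approximable (A i)"
  shows "approximable (\<Union>i. A i)"
  unfolding approximable_def
proof (intro allI impI)
  interpret prob_space NB by (rule prob_space_NB)
  fix \<eta> :: real assume "\<eta> > 0"
  define U where "U N = (\<Union>i<N. A i)" for N
  have U_sets: "U N \<in> sets NB" for N unfolding U_def using sets by auto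
  have U_approx: "approximable (U N)" for N
  proof (induction N)
    case 0
    show ?case
      unfolding approximable_def U_def using determined_by_empty
      by (intro allI impI exI[of _ "{}"] exI[of _ "{}"]) auto
  next
    case (Suc N)
    have "U (Suc N) = A N \<union> U N" unfolding U_def lessThan_Suc by auto
    then show ?case using approximable_Un sets U_sets approx Suc.IH by auto
  qed
  have "(\<lambda>N. measure NB (U N)) \<longlonglongrightarrow> measure NB (\<Union>N. U N)"
    using U_sets by (intro finite_Lim_measure_incseq) (force simp: incseq_def U_def)+
  moreover have "(\<Union>N. U N) = (\<Union>i. A i)" unfolding U_def by auto
  ultimately have "eventually (\<lambda>N. measure NB (\<Union>i. A i) - \<eta> / 2 < measure NB (U N)) sequentially"
    using \<open>\<eta> > 0\<close> by (intro order_tendstoD(1)) auto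
  then obtain N where N: "measure NB (\<Union>i. A i) - \<eta> / 2 < measure NB (U N)"
    by (auto simp: eventually_sequentially)
  obtain J F where F: "finite J" "determined_by S J F" "measure NB (sym_diff (U N) F) < \<eta> / 2"
    using U_approx \<open>\<eta> > 0\<close> unfolding approximable_def by (meson half_gt_zero)
  have F_sets: "F \<in> sets NB" using F determined_by_in_sets_NB by auto
  have UA: "U N \<subseteq> (\<Union>i. A i)" "(\<Union>i. A i) \<in> sets NB" unfolding U_def using sets by auto
  have "measure NB (sym_diff (\<Union>i. A i) F)
      \<le> measure NB (((\<Union>i. A i) - U N) \<union> (sym_diff (U N) F))"
    using UA U_sets F_sets by (intro finite_measure_mono) auto
  also have "\<dots> \<le> measure NB ((\<Union>i. A i) - U N) + measure NB (sym_diff (U N) F)"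
    using UA U_sets F_sets by (intro measure_Un_le) auto
  also have "measure NB ((\<Union>i. A i) - U N) = measure NB (\<Union>i. A i) - measure NB (U N)"
    using UA U_sets by (intro finite_measure_Diff) auto
  finally show "\<exists>J F. finite J \<and> determined_by S J F \<and>
      measure NB (sym_diff (\<Union>i. A i) F) < \<eta>"
    using F N by (intro exI[of _ J] exI[of _ F]) auto
qed

lemma approximable_sets:
  assumes "X \<in> sets NB"
  shows "approximable X"
proof -
  let ?\<Omega> = "space (seq_space S)" and ?E = "prod_algebra UNIV (\<lambda>_. count_space S)"
  have "sets NB = sigma_sets ?\<Omega> ?E"
    by (simp add: sets_NB seq_space_def sets_PiM space_PiM)
  with assms have "X \<in> sigma_sets ?\<Omega> ?E" by simp
  then show ?thesis
  proof (induction rule: sigma_sets.induct)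
    case (Basic A)
    then obtain J E where "A = prod_emb UNIV (\<lambda>_. count_space S) J (PiE J E)" "finite J"
      by (force elim!: prod_algebraE)
    moreover have "prod_emb UNIV (\<lambda>_. count_space S) J (PiE J E) = cylinder S J E"
      by (auto simp: prod_emb_def cylinder_def seq_space_def space_PiM PiE_iff)
    ultimately show ?case
      unfolding approximable_def using determined_by_cylinder
      by (intro allI impI exI[of _ J] exI[of _ A]) auto
  next
    case Empty
    show ?case unfolding approximable_def using determined_by_empty
      by (intro allI impI exI[of _ "{}"] exI[of _ "{}"]) auto
  next
    case (Compl A)
    then show ?case
      using approximable_compl[of A] sigma_sets_into_sp[OF prod_algebra_sets_into_space]
      by (metis (no_types, lifting) sets.sets_into_space \<open>sets NB = sigma_sets ?\<Omega> ?E\<close> space_NB)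
  next
    case (Union A)
    then show ?case using approximable_UN[of A] \<open>sets NB = sigma_sets ?\<Omega> ?E\<close> by blast
  qed
qed

text \<open>No letter has probability above q = 1 - min (p a) (p b) < 1.\<close>
lemma measure_point_cylinder_le_power:
  assumes a: "a \<in> support" and b: "b \<in> support" and ab: "a \<noteq> b"
  obtains q :: real where "q < 1"
    "\<And>c k. measure NB {x\<in>space NB. \<forall>l\<in>{- int k..int k}. x l = c l} \<le> q ^ k"
proof
  define q where "q = 1 - min (p a) (p b)"
  show q1: "q < 1" using a b unfolding q_def support_def by auto
  have two: "p x + p y \<le> 1" if "x \<in> S" "y \<in> S" "x \<noteq> y" for x y
  proof -
    have "p x + p y = (\<Sum>z\<in>{x, y}. p z)" using that by simp
    also have "\<dots> \<le> (\<Sum>z\<in>S. p z)" using that finite_S p_nonneg by (intro sum_mono2) auto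
    finally show ?thesis using sum_p by simp
  qed
  have pq: "p s \<le> q" for s
  proof (cases "s \<in> S")
    case False
    then show ?thesis using p_eq_0 two[of a b] a b ab support_subset p_nonneg[of a] p_nonneg[of b]
      unfolding q_def by (smt (verit) subsetD)
  next
    case True
    then show ?thesis using two[OF True] two[of a b] a b ab support_subset
      unfolding q_def by (smt (verit) subsetD)
  qed
  have q0: "0 \<le> q" using pq[of a] p_nonneg[of a] by linarith
  fix c k
  have "measure NB {x\<in>space NB. \<forall>l\<in>{- int k..int k}. x l = c l} = (\<Prod>l\<in>{- int k..int k}. p (c l))"
    by (rule measure_point_cylinder) simp
  also have "\<dots> \<le> (\<Prod>l\<in>{- int k..int k}. q)" using pq p_nonneg by (intro prod_mono) auto
  also have "\<dots> = q ^ card {- int k..int k}" by simp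
  also have "\<dots> \<le> q ^ k" using q0 q1 by (intro power_decreasing) auto
  finally show "measure NB {x\<in>space NB. \<forall>l\<in>{- int k..int k}. x l = c l} \<le> q ^ k" .
qed

lemma window_approximation:
  fixes K :: nat
  assumes A: "\<And>k. k < K \<Longrightarrow> A k \<in> sets NB" and "\<eta> > 0"
  obtains n :: nat and F where
    "\<And>k. k < K \<Longrightarrow> determined_by S {- int n..int n} (F k)"
    "\<And>k. k < K \<Longrightarrow> measure NB (sym_diff (A k) (F k)) < \<eta>"
    "\<And>k. k < K \<Longrightarrow> measure NB (A k) = 0 \<Longrightarrow> F k = {}"
proof -
  define good where "good k J F \<longleftrightarrow> finite J \<and> determined_by S J F
      \<and> measure NB (sym_diff (A k) F) < \<eta> \<and> (measure NB (A k) = 0 \<longrightarrow> F = {})" for k J F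
  have "\<exists>J F. good k J F" if k: "k < K" for k
  proof (cases "measure NB (A k) = 0")
    case True
    then have "good k {} {}" unfolding good_def using \<open>\<eta> > 0\<close> determined_by_empty by simp
    then show ?thesis by blast
  next
    case False
    obtain J F where "finite J" "determined_by S J F" "measure NB (sym_diff (A k) F) < \<eta>"
      using approximable_sets[OF A[OF k]] \<open>\<eta> > 0\<close> unfolding approximable_def by blast
    then have "good k J F" unfolding good_def using False by simp
    then show ?thesis by blast
  qed
  then obtain J F where JF: "\<And>k. k < K \<Longrightarrow> good k (J k) (F k)" by metis
  have "finite (\<Union>k<K. J k)" using JF unfolding good_def by (intro finite_UN_I) auto
  then obtain n where n: "(\<Union>k<K. J k) \<subseteq> {- int n..int n}"
    using finite_subset_symmetric_interval by blast
  show ?thesis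
  proof (rule that[of n F])
    fix k assume k: "k < K"
    then have "J k \<subseteq> {- int n..int n}" using n by auto
    then show "determined_by S {- int n..int n} (F k)"
      using JF[OF k] determined_by_mono unfolding good_def by blast
    show "measure NB (sym_diff (A k) (F k)) < \<eta>" using JF[OF k] unfolding good_def by simp
    show "measure NB (A k) = 0 \<Longrightarrow> F k = {}" using JF[OF k] unfolding good_def by simp
  qed
qed

end

section \<open>Sliding block codes of the Bernoulli shift\<close>

locale block_code = bernoulli_shift P Z S NB
  for P :: "'w measure" and Z :: "int \<Rightarrow> 'w \<Rightarrow> 'b" and S :: "'b set" and NB :: "(int \<Rightarrow> 'b) measure" +
  fixes n :: nat and g :: "(int \<Rightarrow> 'b) \<Rightarrow> 'a"
  assumes g_inj: "inj_on g (PiE {-int n..int n} (\<lambda>_. {s\<in>S. measure P {\<omega>\<in>space P. Z 0 \<omega> = s} > 0}))"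
begin

definition W :: "int set" where "W = {-int n..int n}"
definition blocks :: "(int \<Rightarrow> 'b) set" where "blocks = PiE W (\<lambda>_. support)"
definition block :: "int \<Rightarrow> (int \<Rightarrow> 'b) \<Rightarrow> (int \<Rightarrow> 'b)" where
  "block i x = restrict (\<lambda>j. x (i + j)) W"
text \<open>Off the typical sequences a block is replaced by an arbitrary one, so that the coding takes
  values in the finite alphabet everywhere.\<close>
definition code :: "(int \<Rightarrow> 'b) \<Rightarrow> 'a" where
  "code w = g (if w \<in> blocks then w else SOME w. w \<in> blocks)"
definition alphabet :: "'a set" where "alphabet = g ` blocks"
definition coding :: "(int \<Rightarrow> 'b) \<Rightarrow> (int \<Rightarrow> 'a)" where "coding x = (\<lambda>i. code (block i x))"
definition N :: "(int \<Rightarrow> 'a) measure" where "N = distr NB (seq_space alphabet) coding"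

lemma inj_on_g: "inj_on g blocks" using g_inj by (simp add: blocks_def W_def support_def p_def)
lemma finite_W: "finite W" by (simp add: W_def)
lemma zero_in_W: "0 \<in> W" by (simp add: W_def)
lemma finite_blocks: "finite blocks" unfolding blocks_def using finite_W finite_support by (simp add: finite_PiE)
lemma blocks_nonempty: "blocks \<noteq> {}" unfolding blocks_def using support_nonempty by (simp add: PiE_eq_empty_iff)
lemma finite_alphabet: "finite alphabet" unfolding alphabet_def using finite_blocks by simp
lemma alphabet_nonempty: "alphabet \<noteq> {}" unfolding alphabet_def using blocks_nonempty by simp
lemma code_in_alphabet: "code w \<in> alphabet"
  unfolding code_def alphabet_def using blocks_nonempty by (auto simp: some_in_eq)
lemma code_eq: "w \<in> blocks \<Longrightarrow> code w = g w" unfolding code_def by simp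

lemma block_typical: "x \<in> typical \<Longrightarrow> block i x \<in> blocks"
  unfolding block_def blocks_def typical_def by auto

lemma block_eq_iff: "w \<in> blocks \<Longrightarrow> block i x = w \<longleftrightarrow> (\<forall>j\<in>W. x (i + j) = w j)"
  unfolding block_def blocks_def by (auto simp: fun_eq_iff PiE_iff extensional_def restrict_def)

lemma block_eq_block_iff: "block i x = block i y \<longleftrightarrow> (\<forall>j\<in>W. x (i + j) = y (i + j))"
  unfolding block_def by (auto simp: fun_eq_iff restrict_def)

lemma block_0: "block i x 0 = x i" unfolding block_def using zero_in_W by simp

lemma block_shift_by: "block i (\<lambda>l. x (l + k)) = block (i + k) x"
  unfolding block_def by (auto simp: fun_eq_iff restrict_def ac_simps)

lemma block_cong: "(\<forall>l\<in>{i - int n..i + int n}. x l = y l) \<Longrightarrow> block i x = block i y"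
  unfolding block_eq_block_iff W_def by auto

lemma coding_typical: "x \<in> typical \<Longrightarrow> coding x i = g (block i x)"
  unfolding coding_def using block_typical code_eq by simp

lemma coding_in_space: "coding x \<in> space (seq_space alphabet)"
  unfolding space_seq_space coding_def using code_in_alphabet by simp

lemma coding_shift_by: "coding (\<lambda>l. x (l + k)) = (\<lambda>i. coding x (i + k))"
  unfolding coding_def by (simp add: block_shift_by)

lemma measurable_code_block: "(\<lambda>x. code (block i x)) \<in> seq_space S \<rightarrow>\<^sub>M count_space alphabet"
  unfolding measurable_count_space_eq2[OF finite_alphabet]
proof (intro conjI ballI)
  show "(\<lambda>x. code (block i x)) \<in> space (seq_space S) \<rightarrow> alphabet" using code_in_alphabet by simp
  fix a
  have "(\<lambda>x. code (block i x)) -` {a} \<inter> space (seq_space S) = {x\<in>space (seq_space S). code (block i x) = a}" by auto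
  also have "\<dots> \<in> sets (seq_space S)"
  proof (rule determined_by_in_sets[OF finite_S _
        determined_by_fun[where J="{i - int n..i + int n}" and h="\<lambda>x. code (block i x)" and Q="\<lambda>v. v = a"]])
    fix x y :: "int \<Rightarrow> 'b" assume "\<forall>l\<in>{i - int n..i + int n}. x l = y l"
    then show "code (block i x) = code (block i y)" by (rule arg_cong[OF block_cong])
  qed simp
  finally show "(\<lambda>x. code (block i x)) -` {a} \<inter> space (seq_space S) \<in> sets (seq_space S)" .
qed

lemma measurable_coding_seq: "coding \<in> seq_space S \<rightarrow>\<^sub>M seq_space alphabet"
proof -
  have "(\<lambda>x i. code (block i x)) \<in> seq_space S \<rightarrow>\<^sub>M PiM UNIV (\<lambda>_. count_space alphabet)"
  proof (rule measurable_PiM_single'[where f="\<lambda>i x. code (block i x)"])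
    fix i :: int show "(\<lambda>x. code (block i x)) \<in> seq_space S \<rightarrow>\<^sub>M count_space alphabet" by (rule measurable_code_block)
  next
    show "(\<lambda>x i. code (block i x)) \<in> space (seq_space S) \<rightarrow> PiE UNIV (\<lambda>i. space (count_space alphabet))"
      using code_in_alphabet by (auto simp: PiE_iff)
  qed
  then show ?thesis unfolding coding_def seq_space_def[of alphabet] .
qed

lemma measurable_coding: "coding \<in> NB \<rightarrow>\<^sub>M seq_space alphabet"
  using measurable_coding_seq by (simp add: measurable_cong_sets[OF sets_NB refl])

lemma sets_N: "sets N = sets (seq_space alphabet)" unfolding N_def by simp
lemma space_N: "space N = space (seq_space alphabet)" unfolding N_def by simp
lemma prob_space_N: "prob_space N" unfolding N_def by (rule prob_space.prob_space_distr[OF prob_space_NB measurable_coding])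

lemma measure_N:
  assumes "Y \<in> sets (seq_space alphabet)"
  shows "measure N Y = measure NB {x\<in>space NB. coding x \<in> Y}"
proof -
  have "measure N Y = measure NB (coding -` Y \<inter> space NB)" unfolding N_def
    by (rule measure_distr[OF measurable_coding assms])
  also have "coding -` Y \<inter> space NB = {x\<in>space NB. coding x \<in> Y}" by auto
  finally show ?thesis .
qed

lemma measure_N_typical:
  assumes "Y \<in> sets (seq_space alphabet)"
  shows "measure N Y = measure NB {x\<in>typical. coding x \<in> Y}"
proof -
  have m: "{x\<in>space NB. coding x \<in> Y} \<in> sets NB"
  proof -
    have "{x\<in>space NB. coding x \<in> Y} = coding -` Y \<inter> space NB" by auto
    then show ?thesis using measurable_sets[OF measurable_coding assms] by simp
  qed
  have "{x\<in>typical. coding x \<in> Y} = {x\<in>space NB. coding x \<in> Y} \<inter> typical" using typical_def by auto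
  then show ?thesis using measure_N[OF assms] measure_Int_typical[OF m] by simp
qed

lemma seq_event_in_sets:
  assumes "finite I"
  shows "{y\<in>space (seq_space alphabet). \<forall>i\<in>I. y i \<in> A i} \<in> sets (seq_space alphabet)"
proof (rule determined_by_in_sets[OF finite_alphabet assms])
  show "determined_by alphabet I {y\<in>space (seq_space alphabet). \<forall>i\<in>I. y i \<in> A i}"
    by (rule determined_byI) auto
qed

lemma stationary_N: "stationary_process N (\<lambda>t m. m t) alphabet"
  unfolding stationary_process_def finite_process_def
proof (intro conjI allI impI)
  show "prob_space N" by (rule prob_space_N)
  show "finite alphabet" by (rule finite_alphabet)
  show "alphabet \<noteq> {}" by (rule alphabet_nonempty)
  fix t show "(\<lambda>m. m t) \<in> N \<rightarrow>\<^sub>M count_space alphabet"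
    using measurable_coordinate[of t alphabet] by (simp add: measurable_cong_sets[OF sets_N refl])
next
  fix I :: "int set" and A :: "int \<Rightarrow> 'a set" and k :: int
  assume I: "finite I"
  define Y0 where "Y0 = {y\<in>space (seq_space alphabet). \<forall>i\<in>I. y i \<in> A i}"
  define Yk where "Yk = {y\<in>space (seq_space alphabet). \<forall>i\<in>(\<lambda>i. i + k) ` I. y i \<in> A (i - k)}"
  have Y0s: "Y0 \<in> sets (seq_space alphabet)" unfolding Y0_def by (rule seq_event_in_sets[OF I])
  have Yks: "Yk \<in> sets (seq_space alphabet)" unfolding Yk_def by (rule seq_event_in_sets) (use I in simp)
  have e1: "{\<omega>\<in>space N. \<forall>i\<in>I. \<omega> (i + k) \<in> A i} = Yk" unfolding Yk_def space_N by auto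
  have e0: "{\<omega>\<in>space N. \<forall>i\<in>I. \<omega> i \<in> A i} = Y0" unfolding Y0_def space_N by auto
  have X0s: "{x\<in>space NB. coding x \<in> Y0} \<in> sets NB"
  proof -
    have "{x\<in>space NB. coding x \<in> Y0} = coding -` Y0 \<inter> space NB" by auto
    then show ?thesis using measurable_sets[OF measurable_coding Y0s] by simp
  qed
  have "{x\<in>space NB. coding x \<in> Yk} = {x\<in>space NB. (\<lambda>l. x (l + k)) \<in> {x\<in>space NB. coding x \<in> Y0}}"
    unfolding Yk_def Y0_def using coding_in_space
    by (auto simp: coding_shift_by space_NB space_seq_space)
  then have "measure NB {x\<in>space NB. coding x \<in> Yk} = measure NB {x\<in>space NB. coding x \<in> Y0}"
    using measure_shift_by_preimage[OF X0s, of k] by simp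
  then show "measure N {\<omega>\<in>space N. \<forall>i\<in>I. \<omega> (i + k) \<in> A i}
      = measure N {\<omega>\<in>space N. \<forall>i\<in>I. \<omega> i \<in> A i}"
    unfolding e1 e0 using measure_N[OF Yks] measure_N[OF Y0s] by simp
qed


lemma block_apply: "j \<in> W \<Longrightarrow> block i x j = x (i + j)" unfolding block_def by simp

definition block_cylinder :: "int set \<Rightarrow> (int \<Rightarrow> int \<Rightarrow> 'b) \<Rightarrow> (int \<Rightarrow> 'b) set" where
  "block_cylinder I w = {x\<in>space NB. \<forall>i\<in>I. block i x = w i}"

lemma block_cylinder_in_sets:
  assumes "finite I"
  shows "block_cylinder I w \<in> sets NB"
proof -
  let ?J = "\<Union>i\<in>I. {i - int n..i + int n}"
  have fd: "determined_by S ?J (block_cylinder I w)"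
  proof (rule determined_byI)
    show "block_cylinder I w \<subseteq> space (seq_space S)" unfolding block_cylinder_def space_NB by auto
    fix x y assume xy: "x \<in> space (seq_space S)" "y \<in> space (seq_space S)" "\<forall>i\<in>?J. x i = y i" "x \<in> block_cylinder I w"
    have "block i y = w i" if "i \<in> I" for i
    proof -
      have "block i x = block i y" by (rule block_cong) (use xy(3) that in auto)
      then show ?thesis using xy(4) that unfolding block_cylinder_def by auto
    qed
    then show "y \<in> block_cylinder I w" unfolding block_cylinder_def space_NB using xy(2) by auto
  qed
  then have "block_cylinder I w \<in> sets (seq_space S)" using determined_by_in_sets[OF finite_S _ fd] assms by auto
  then show ?thesis by (simp add: sets_NB)
qed

lemma block_cylinder_eq_point_cylinder:
  assumes kt: "k \<le> t" and x0: "x0 \<in> block_cylinder {k..t} w"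
  shows "block_cylinder {k..t} w = {x\<in>space NB. \<forall>l\<in>{k - int n..t + int n}. x l = x0 l}"
proof
  show "block_cylinder {k..t} w \<subseteq> {x\<in>space NB. \<forall>l\<in>{k - int n..t + int n}. x l = x0 l}"
  proof safe
    fix x assume x: "x \<in> block_cylinder {k..t} w"
    then show "x \<in> space NB" unfolding block_cylinder_def by auto
    fix l assume l: "l \<in> {k - int n..t + int n}"
    define i where "i = max k (min t l)"
    have i: "i \<in> {k..t}" using kt unfolding i_def by auto
    have j: "l - i \<in> W" using l kt unfolding i_def W_def by auto
    have "block i x = block i x0" using x x0 i unfolding block_cylinder_def by auto
    then have "x (i + (l - i)) = x0 (i + (l - i))" using j unfolding block_eq_block_iff by blast
    then show "x l = x0 l" by simp
  qed
next
  show "{x\<in>space NB. \<forall>l\<in>{k - int n..t + int n}. x l = x0 l} \<subseteq> block_cylinder {k..t} w"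
  proof safe
    fix x assume x: "x \<in> space NB" "\<forall>l\<in>{k - int n..t + int n}. x l = x0 l"
    have "block i x = w i" if i: "i \<in> {k..t}" for i
    proof -
      have "block i x = block i x0" by (rule block_cong) (use x(2) i in auto)
      then show ?thesis using x0 i unfolding block_cylinder_def by auto
    qed
    then show "x \<in> block_cylinder {k..t} w" unfolding block_cylinder_def using x(1) by auto
  qed
qed

lemma block_cylinder_extend:
  "k \<le> t \<Longrightarrow> block_cylinder {k..t + 1} (w(t + 1 := v))
     = block_cylinder {k..t} w \<inter> {x\<in>space NB. block (t + 1) x = v}"
  unfolding block_cylinder_def by auto

definition compatible :: "(int \<Rightarrow> 'b) \<Rightarrow> (int \<Rightarrow> 'b) \<Rightarrow> bool" where
  "compatible u v \<longleftrightarrow> (\<forall>j\<in>W. j + 1 \<in> W \<longrightarrow> v j = u (j + 1))"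

text \<open>The transition matrix of the block process: a block can only be followed by a shifted copy of
  itself, whose one new letter is drawn according to p.\<close>
definition block_trans :: "(int \<Rightarrow> 'b) \<Rightarrow> (int \<Rightarrow> 'b) \<Rightarrow> real" where
  "block_trans u v = (if compatible u v then p (v (int n)) else 0)"

lemma block_cylinder_extend_incompatible:
  assumes "k \<le> t" "\<not> compatible (w t) v"
  shows "block_cylinder {k..t + 1} (w(t + 1 := v)) = {}"
proof (rule ccontr)
  obtain j where j: "j \<in> W" "j + 1 \<in> W" "v j \<noteq> w t (j + 1)"
    using assms(2) unfolding compatible_def by auto
  assume "block_cylinder {k..t + 1} (w(t + 1 := v)) \<noteq> {}"
  then obtain x where x: "x \<in> block_cylinder {k..t} w" "block (t + 1) x = v"
    using block_cylinder_extend[OF assms(1)] by auto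
  have "block t x = w t" using x(1) assms(1) unfolding block_cylinder_def by auto
  then have "x (t + (j + 1)) = w t (j + 1)" using block_apply[OF j(2), of t x] by simp
  moreover have "x (t + 1 + j) = v j" using x(2) block_apply[OF j(1), of "t + 1" x] by simp
  ultimately show False using j(3) by (simp add: ac_simps)
qed

lemma block_cylinder_extend_compatible:
  assumes kt: "k \<le> t" and v: "v \<in> blocks" "compatible (w t) v" and x0: "x0 \<in> block_cylinder {k..t} w"
  shows "block_cylinder {k..t + 1} (w(t + 1 := v))
       = {x\<in>space NB. \<forall>l\<in>insert (t + int n + 1) {k - int n..t + int n}. x l = (x0(t + int n + 1 := v (int n))) l}"
    (is "_ = {x\<in>space NB. \<forall>l\<in>insert ?new ?J. x l = ?c l}")
proof -
  have nW: "int n \<in> W" unfolding W_def by simp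
  have "block_cylinder {k..t} w \<inter> {x\<in>space NB. block (t + 1) x = v}
      = {x\<in>space NB. \<forall>l\<in>insert ?new ?J. x l = ?c l}"
  proof (intro set_eqI iffI)
    fix x assume "x \<in> block_cylinder {k..t} w \<inter> {x\<in>space NB. block (t + 1) x = v}"
    then have x: "x \<in> block_cylinder {k..t} w" "block (t + 1) x = v" "x \<in> space NB"
      unfolding block_cylinder_def by auto
    have "x (t + 1 + int n) = v (int n)" using x(2) block_apply[OF nW, of "t + 1" x] by simp
    moreover have "x l = x0 l" if "l \<in> ?J" for l
      using that block_cylinder_eq_point_cylinder[OF kt x0] x(1) by auto
    ultimately show "x \<in> {x\<in>space NB. \<forall>l\<in>insert ?new ?J. x l = ?c l}"
      using x(3) by (auto simp: ac_simps)
  next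
    fix x assume "x \<in> {x\<in>space NB. \<forall>l\<in>insert ?new ?J. x l = ?c l}"
    then have x: "x \<in> space NB" "\<forall>l\<in>insert ?new ?J. x l = ?c l" by auto
    then have "\<forall>l\<in>?J. x l = x0 l" by auto
    then have xG: "x \<in> block_cylinder {k..t} w" using block_cylinder_eq_point_cylinder[OF kt x0] x(1) by auto
    have bt: "block t x = w t" using xG kt unfolding block_cylinder_def by auto
    have "x (t + 1 + j) = v j" if j: "j \<in> W" for j
    proof (cases "j = int n")
      case True
      then show ?thesis using x(2) by (simp add: ac_simps)
    next
      case False
      then have j1: "j + 1 \<in> W" using j unfolding W_def by auto
      have "x (t + (j + 1)) = w t (j + 1)" using bt block_apply[OF j1, of t x] by simp
      then show ?thesis using v(2) j j1 unfolding compatible_def by (simp add: ac_simps)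
    qed
    then have "block (t + 1) x = v" unfolding block_eq_iff[OF v(1)] by blast
    then show "x \<in> block_cylinder {k..t} w \<inter> {x\<in>space NB. block (t + 1) x = v}" using xG x(1) by auto
  qed
  then show ?thesis using block_cylinder_extend[OF kt] by simp
qed

lemma measure_block_cylinder_extend:
  assumes kt: "k \<le> t" and v: "v \<in> blocks"
  shows "measure NB (block_cylinder {k..t + 1} (w(t + 1 := v)))
       = measure NB (block_cylinder {k..t} w) * block_trans (w t) v"
proof (cases "block_cylinder {k..t} w = {} \<or> \<not> compatible (w t) v")
  case True
  then show ?thesis
    using block_cylinder_extend[OF kt] block_cylinder_extend_incompatible[OF kt]
    by (auto simp: block_trans_def)
next
  case False
  then obtain x0 where x0: "x0 \<in> block_cylinder {k..t} w" and c: "compatible (w t) v" by auto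
  let ?J = "{k - int n..t + int n}"
  have "measure NB (block_cylinder {k..t + 1} (w(t + 1 := v)))
      = (\<Prod>l\<in>insert (t + int n + 1) ?J. p ((x0(t + int n + 1 := v (int n))) l))"
    unfolding block_cylinder_extend_compatible[OF kt v c x0] by (rule measure_point_cylinder) simp
  also have "\<dots> = p (v (int n)) * (\<Prod>l\<in>?J. p (x0 l))"
    by (subst prod.insert) (auto intro!: prod.cong)
  also have "(\<Prod>l\<in>?J. p (x0 l)) = measure NB (block_cylinder {k..t} w)"
    using block_cylinder_eq_point_cylinder[OF kt x0] measure_point_cylinder[of ?J x0] by simp
  finally show ?thesis using c unfolding block_trans_def by (simp only: if_True mult.commute)
qed

lemma g_inv_into_blocks: "s \<in> alphabet \<Longrightarrow> inv_into blocks g s \<in> blocks \<and> g (inv_into blocks g s) = s"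
  unfolding alphabet_def by (simp add: inv_into_into f_inv_into_f)

lemma measure_N_block_cylinder:
  assumes "finite I" "\<forall>i\<in>I. w i \<in> blocks"
  shows "measure N {\<omega>\<in>space N. \<forall>i\<in>I. \<omega> i = g (w i)} = measure NB (block_cylinder I w)"
proof -
  have Ys: "{\<omega>\<in>space N. \<forall>i\<in>I. \<omega> i = g (w i)} \<in> sets (seq_space alphabet)"
    using seq_event_in_sets[OF assms(1), of "\<lambda>i. {g (w i)}"] by (simp add: space_N)
  have "{x\<in>typical. coding x \<in> {\<omega>\<in>space N. \<forall>i\<in>I. \<omega> i = g (w i)}} = block_cylinder I w \<inter> typical"
  proof -
    have "x \<in> typical \<Longrightarrow> (g (block i x) = g (w i)) = (block i x = w i)" if "i \<in> I" for x i
      using inj_on_g block_typical assms(2) that by (auto dest: inj_onD)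
    then show ?thesis unfolding block_cylinder_def using coding_in_space
      by (auto simp: coding_typical space_N typical_def)
  qed
  then show ?thesis using measure_N_typical[OF Ys] measure_Int_typical[OF block_cylinder_in_sets[OF assms(1)]] by simp
qed

lemma measure_N_extend:
  assumes kt: "k \<le> t" and w: "\<And>i. w i \<in> blocks" and v: "v \<in> blocks"
  shows "measure N ({\<omega>\<in>space N. \<omega> (t + 1) = g v} \<inter> {\<omega>\<in>space N. \<forall>i\<in>{k..t}. \<omega> i = g (w i)})
       = measure N {\<omega>\<in>space N. \<forall>i\<in>{k..t}. \<omega> i = g (w i)} * block_trans (w t) v"
proof -
  have "{\<omega>\<in>space N. \<omega> (t + 1) = g v} \<inter> {\<omega>\<in>space N. \<forall>i\<in>{k..t}. \<omega> i = g (w i)}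
      = {\<omega>\<in>space N. \<forall>i\<in>{k..t + 1}. \<omega> i = g ((w(t + 1 := v)) i)}"
    using kt by (auto simp: le_less)
  also have "measure N \<dots> = measure NB (block_cylinder {k..t + 1} (w(t + 1 := v)))"
    using w v by (intro measure_N_block_cylinder) auto
  also have "\<dots> = measure NB (block_cylinder {k..t} w) * block_trans (w t) v"
    by (rule measure_block_cylinder_extend[OF kt v])
  also have "measure NB (block_cylinder {k..t} w) = measure N {\<omega>\<in>space N. \<forall>i\<in>{k..t}. \<omega> i = g (w i)}"
    using w by (intro measure_N_block_cylinder[symmetric]) auto
  finally show ?thesis .
qed

lemma markov_N: "markov_process N (\<lambda>t m. m t) alphabet"
  unfolding markov_process_def Let_def
proof (intro conjI allI impI)
  show "stationary_process N (\<lambda>t m. m t) alphabet" by (rule stationary_N)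
  interpret N: prob_space N by (rule prob_space_N)
  fix t k :: int and x :: "int \<Rightarrow> 'a" and s
  assume kt: "k \<le> t" and s: "s \<in> alphabet" and xs: "\<forall>i. x i \<in> alphabet"
  define w where "w i = inv_into blocks g (x i)" for i
  define v where "v = inv_into blocks g s"
  have w: "w i \<in> blocks" "g (w i) = x i" for i using g_inv_into_blocks xs unfolding w_def by auto
  have v: "v \<in> blocks" "g v = s" using g_inv_into_blocks s unfolding v_def by auto
  let ?C = "{\<omega>\<in>space N. \<forall>i\<in>{k..t}. \<omega> i = x i}" and ?D = "{\<omega>\<in>space N. \<omega> t = x t}"
    and ?E = "{\<omega>\<in>space N. \<omega> (t + 1) = s}"
  have C: "?C = {\<omega>\<in>space N. \<forall>i\<in>{k..t}. \<omega> i = g (w i)}" using w by simp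
  have D: "?D = {\<omega>\<in>space N. \<forall>i\<in>{t..t}. \<omega> i = g (w i)}" using w by simp
  have E: "?E = {\<omega>\<in>space N. \<omega> (t + 1) = g v}" using v by simp
  have EC: "measure N (?E \<inter> ?C) = measure N ?C * block_trans (w t) v"
    unfolding C E by (rule measure_N_extend[OF kt w(1) v(1)])
  have ED: "measure N (?E \<inter> ?D) = measure N ?D * block_trans (w t) v"
    unfolding D E by (rule measure_N_extend[OF _ w(1) v(1)]) simp
  assume pos: "0 < measure N ?C"
  have "?D \<in> N.events" using seq_event_in_sets[of "{t}" "\<lambda>_. {x t}"] by (simp add: sets_N space_N)
  then have "measure N ?C \<le> measure N ?D" using kt by (intro N.finite_measure_mono) auto
  then show "measure N (?E \<inter> ?C) / measure N ?C = measure N (?E \<inter> ?D) / measure N ?D"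
    unfolding EC ED using pos by simp
qed

lemma measure_block_cylinder_pair_pos:
  assumes v: "v \<in> blocks" and v': "v' \<in> blocks" and m: "2 * int n < m"
  shows "measure NB (block_cylinder {0, m} (\<lambda>i. if i = 0 then v' else v)) > 0"
proof -
  let ?J = "{- int n..int n} \<union> {m - int n..m + int n}"
  define c where "c l = (if l \<le> int n then v' l else v (l - m))" for l
  have c: "c l \<in> support" if "l \<in> ?J" for l
    using that v v' m unfolding c_def blocks_def W_def by (auto simp: PiE_iff)
  have "{x\<in>space NB. \<forall>l\<in>?J. x l = c l} \<subseteq> block_cylinder {0, m} (\<lambda>i. if i = 0 then v' else v)"
  proof safe
    fix x assume x: "x \<in> space NB" "\<forall>l\<in>?J. x l = c l"
    have "block 0 x = v'" unfolding block_eq_iff[OF v'] using x(2) unfolding c_def W_def by auto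
    moreover have "block m x = v" unfolding block_eq_iff[OF v] using x(2) m unfolding c_def W_def by auto
    ultimately show "x \<in> block_cylinder {0, m} (\<lambda>i. if i = 0 then v' else v)"
      unfolding block_cylinder_def using x(1) m by auto
  qed
  then have "measure NB {x\<in>space NB. \<forall>l\<in>?J. x l = c l}
      \<le> measure NB (block_cylinder {0, m} (\<lambda>i. if i = 0 then v' else v))"
    by (intro finite_measure.finite_measure_mono[OF prob_space.finite_measure[OF prob_space_NB]]
        block_cylinder_in_sets) auto
  moreover have "(\<Prod>l\<in>?J. p (c l)) > 0" using c by (intro prod_pos) (auto simp: support_def)
  then have "measure NB {x\<in>space NB. \<forall>l\<in>?J. x l = c l} > 0" by (simp add: measure_point_cylinder)
  ultimately show ?thesis by linarith
qed

lemma trans_prob_pos: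
  assumes s: "s \<in> alphabet" and s': "s' \<in> alphabet" and m: "2 * int n < int m"
  shows "trans_prob N (\<lambda>t m. m t) m s s' > 0"
proof -
  interpret N: prob_space N by (rule prob_space_N)
  define v where "v = inv_into blocks g s"
  define v' where "v' = inv_into blocks g s'"
  have vB: "v \<in> blocks" and gv: "g v = s" using g_inv_into_blocks s unfolding v_def by auto
  have vB': "v' \<in> blocks" and gv': "g v' = s'" using g_inv_into_blocks s' unfolding v'_def by auto
  define w where "w = (\<lambda>i::int. if i = 0 then v' else v)"
  have m0: "int m \<noteq> 0" using m by simp
  have num: "{\<omega>\<in>space N. \<omega> (int m) = s \<and> \<omega> 0 = s'}
      = {\<omega>\<in>space N. \<forall>i\<in>{0, int m}. \<omega> i = g (w i)}"
    unfolding w_def using gv gv' m0 by auto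
  have "measure N {\<omega>\<in>space N. \<forall>i\<in>{0, int m}. \<omega> i = g (w i)} = measure NB (block_cylinder {0, int m} w)"
    by (rule measure_N_block_cylinder) (use vB vB' in \<open>auto simp: w_def\<close>)
  also have "\<dots> > 0" unfolding w_def by (rule measure_block_cylinder_pair_pos[OF vB vB' m])
  finally have pnum: "measure N {\<omega>\<in>space N. \<omega> (int m) = s \<and> \<omega> 0 = s'} > 0" unfolding num .
  have "{\<omega>\<in>space N. \<omega> 0 = s'} \<in> sets N"
    using seq_event_in_sets[of "{0}" "\<lambda>_. {s'}"] by (simp add: sets_N space_N)
  then have "measure N {\<omega>\<in>space N. \<omega> (int m) = s \<and> \<omega> 0 = s'} \<le> measure N {\<omega>\<in>space N. \<omega> 0 = s'}"
    by (intro N.finite_measure_mono) auto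
  then show ?thesis unfolding trans_prob_def using pnum by simp
qed

lemma irreducible_N: "irreducible_proc N (\<lambda>t m. m t) alphabet"
  unfolding irreducible_proc_def
proof (intro ballI)
  fix s s' assume "s \<in> alphabet" "s' \<in> alphabet"
  then show "\<exists>k. 1 \<le> k \<and> 0 < trans_prob N (\<lambda>t m. m t) k s s'"
    by (intro exI[of _ "2 * n + 1"]) (auto intro!: trans_prob_pos)
qed

lemma aperiodic_N: "aperiodic_proc N (\<lambda>t m. m t) alphabet"
  unfolding aperiodic_proc_def
proof (intro ballI)
  fix s assume s: "s \<in> alphabet"
  let ?A = "{m. 1 \<le> m \<and> 0 < trans_prob N (\<lambda>t m. m t) m s s}"
  have a1: "2 * n + 1 \<in> ?A" using s by (auto intro!: trans_prob_pos)
  have a2: "2 * n + 2 \<in> ?A" using s by (auto intro!: trans_prob_pos)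
  have g1: "Gcd ?A dvd 2 * n + 1" using a1 by (rule Gcd_dvd)
  have g2: "Gcd ?A dvd 2 * n + 2" using a2 by (rule Gcd_dvd)
  have "Gcd ?A dvd (2 * n + 2) - (2 * n + 1)" by (rule dvd_diff_nat[OF g2 g1])
  then show "Gcd ?A = 1" by simp
qed


definition decoding :: "(int \<Rightarrow> 'a) \<Rightarrow> (int \<Rightarrow> 'b)" where "decoding y = (\<lambda>i. inv_into blocks g (y i) 0)"

lemma decoding_coding: "x \<in> typical \<Longrightarrow> decoding (coding x) = x"
  unfolding decoding_def by (auto simp: fun_eq_iff coding_typical block_typical inj_on_g block_0)

lemma inj_on_coding: "inj_on coding typical"
  by (rule inj_on_inverseI[where g=decoding]) (rule decoding_coding)

lemma measurable_decoding: "decoding \<in> seq_space alphabet \<rightarrow>\<^sub>M seq_space S"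
proof -
  have "(\<lambda>y i. inv_into blocks g (y i) 0) \<in> seq_space alphabet \<rightarrow>\<^sub>M PiM UNIV (\<lambda>_. count_space S)"
  proof (rule measurable_PiM_single'[where f="\<lambda>i y. inv_into blocks g (y i) 0"])
    fix i :: int
    have f: "(\<lambda>a. inv_into blocks g a 0) \<in> count_space alphabet \<rightarrow>\<^sub>M count_space S"
      using g_inv_into_blocks zero_in_W support_subset unfolding measurable_count_space_eq1 blocks_def by (auto simp: PiE_iff)
    show "(\<lambda>y. inv_into blocks g (y i) 0) \<in> seq_space alphabet \<rightarrow>\<^sub>M count_space S"
      by (rule measurable_compose[OF measurable_coordinate f])
  next
    show "(\<lambda>y i. inv_into blocks g (y i) 0) \<in> space (seq_space alphabet) \<rightarrow> PiE UNIV (\<lambda>i. space (count_space S))"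
      using g_inv_into_blocks zero_in_W support_subset unfolding blocks_def by (auto simp: PiE_iff space_seq_space)
  qed
  then show ?thesis unfolding decoding_def seq_space_def[of S] .
qed

lemma coding_fixed_points_in_sets: "{y\<in>space (seq_space alphabet). coding (decoding y) = y} \<in> sets (seq_space alphabet)"
proof -
  have one: "{y\<in>space (seq_space alphabet). code (block i (decoding y)) = y i} \<in> sets (seq_space alphabet)" for i
  proof -
    have "determined_by alphabet {i - int n..i + int n} {y\<in>space (seq_space alphabet). code (block i (decoding y)) = y i}"
    proof (rule determined_byI)
      fix x y :: "int \<Rightarrow> 'a" assume xy: "\<forall>l\<in>{i - int n..i + int n}. x l = y l"
        and "x \<in> {y\<in>space (seq_space alphabet). code (block i (decoding y)) = y i}" "y \<in> space (seq_space alphabet)"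
      moreover have "block i (decoding x) = block i (decoding y)" by (rule block_cong) (use xy in \<open>auto simp: decoding_def\<close>)
      moreover have "x i = y i" using xy by auto
      ultimately show "y \<in> {y\<in>space (seq_space alphabet). code (block i (decoding y)) = y i}" by simp
    qed auto
    then show ?thesis by (rule determined_by_in_sets[OF finite_alphabet, rotated]) simp
  qed
  have "{y\<in>space (seq_space alphabet). coding (decoding y) = y}
      = space (seq_space alphabet) \<inter> (\<Inter>i. {y\<in>space (seq_space alphabet). code (block i (decoding y)) = y i})"
    by (auto simp: coding_def fun_eq_iff)
  also have "\<dots> \<in> sets (seq_space alphabet)" using one by auto
  finally show ?thesis .
qed

lemma coding_image_in_sets:
  assumes X: "X \<in> sets NB" "X \<subseteq> typical"
  shows "coding ` X \<in> sets (seq_space alphabet)"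
proof -
  have "coding ` X = {y\<in>space (seq_space alphabet). coding (decoding y) = y} \<inter> (decoding -` X \<inter> space (seq_space alphabet))"
  proof (intro set_eqI iffI)
    fix y assume "y \<in> coding ` X"
    then obtain x where x: "x \<in> X" "y = coding x" by auto
    have "decoding y = x" using x X(2) decoding_coding by auto
    then show "y \<in> {y\<in>space (seq_space alphabet). coding (decoding y) = y} \<inter> (decoding -` X \<inter> space (seq_space alphabet))"
      using x coding_in_space by auto
  next
    fix y assume "y \<in> {y\<in>space (seq_space alphabet). coding (decoding y) = y} \<inter> (decoding -` X \<inter> space (seq_space alphabet))"
    then have "coding (decoding y) = y" "decoding y \<in> X" by auto
    then show "y \<in> coding ` X" by (metis image_eqI)
  qed
  also have "\<dots> \<in> sets (seq_space alphabet)"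
    using coding_fixed_points_in_sets measurable_sets[OF measurable_decoding, of X] X(1) sets_NB by auto
  finally show ?thesis .
qed

lemma typical_shift: "x \<in> typical \<Longrightarrow> shift x \<in> typical"
  unfolding typical_def shift_def by (auto simp: space_NB space_seq_space)

lemma coding_shift: "coding (shift x) = shift (coding x)"
  using coding_shift_by[of x 1] unfolding shift_def by simp

lemma coding_preimage_image:
  assumes "X \<subseteq> typical"
  shows "coding -` (coding ` X) \<inter> space NB \<inter> typical = X"
  using assms inj_on_coding typical_def by (auto dest: inj_onD)

end

lemma inj_on_choice:
  assumes "finite X" "\<And>x. x \<in> X \<Longrightarrow> infinite (Q x)"
  shows "\<exists>g. inj_on g X \<and> (\<forall>x\<in>X. g x \<in> Q x)"
  using assms
proof (induction X rule: finite_induct)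
  case (insert x X)
  then obtain g where g: "inj_on g X" "\<forall>y\<in>X. g y \<in> Q y" by auto
  have "Q x - g ` X \<noteq> {}"
    using insert by (metis Diff_infinite_finite finite_imageI finite.emptyI insertI1)
  then obtain a where a: "a \<in> Q x" "a \<notin> g ` X" by auto
  have "inj_on (g(x := a)) (insert x X)" using g(1) a(2) insert(2) by (auto simp: inj_on_def)
  moreover have "\<forall>y\<in>insert x X. (g(x := a)) y \<in> Q y" using g(2) a(1) insert(2) by auto
  ultimately show ?case by blast
qed auto

lemma singleton_in_sets:
  assumes ms: "Metric_space (space M) d"
    and balls: "\<forall>x\<in>space M. \<forall>r. Metric_space.mball (space M) d x r \<in> sets M"
    and m: "m \<in> space M"
  shows "{m} \<in> sets M"
proof -
  interpret Metric_space "space M" d by (rule ms)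
  have "{m} = space M \<inter> (\<Inter>k. mball m (1 / Suc k))"
  proof (intro set_eqI iffI)
    fix y assume y: "y \<in> space M \<inter> (\<Inter>k. mball m (1 / Suc k))"
    have "d m y \<le> 0"
    proof (rule ccontr)
      assume "\<not> d m y \<le> 0"
      then have "0 < d m y" by simp
      then obtain k where "inverse (real (Suc k)) < d m y" using reals_Archimedean by blast
      moreover have "d m y < 1 / Suc k" using y by auto
      ultimately show False by (simp add: inverse_eq_divide)
    qed
    then show "y \<in> {m}" using y m nonneg[of m y] by auto
  qed (use m in auto)
  also have "\<dots> \<in> sets M" using balls m by auto
  finally show ?thesis .
qed

lemma (in finite_measure) infinite_if_measure_pos:
  assumes "A \<in> sets M" "measure M A > 0" "\<And>m. m \<in> space M \<Longrightarrow> {m} \<in> sets M \<and> measure M {m} = 0"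
  shows "infinite A"
proof
  assume "finite A"
  moreover have "A \<subseteq> space M" using assms(1) sets.sets_into_space by auto
  ultimately have "measure M A = (\<Sum>x\<in>A. measure M {x})"
    using assms(3) by (intro measure_eq_sum_singleton) (auto simp: emeasure_eq_measure)
  also have "\<dots> = 0" using \<open>A \<subseteq> space M\<close> assms(3) by (intro sum.neutral) auto
  finally show False using assms(2) by simp
qed

lemma (in finite_measure) measure_Diff_disjointed_le:
  fixes \<eta> :: real
  assumes "disjoint_family A" "\<And>i. A i \<in> sets M" "\<And>i. i \<le> k \<Longrightarrow> F i \<in> sets M"
    and "\<And>i. i \<le> k \<Longrightarrow> measure M (sym_diff (A i) (F i)) \<le> \<eta>"
  shows "measure M (A k - disjointed F k) \<le> real (Suc k) * \<eta>"
proof -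
  have "A k - disjointed F k \<subseteq> (A k - F k) \<union> (\<Union>i<k. F i - A i)"
  proof
    fix x assume x: "x \<in> A k - disjointed F k"
    show "x \<in> (A k - F k) \<union> (\<Union>i<k. F i - A i)"
    proof (cases "x \<in> F k")
      case True
      then obtain i where i: "i < k" "x \<in> F i" using x by (auto simp: disjointed_def)
      moreover have "A i \<inter> A k = {}" using assms(1) i(1) unfolding disjoint_family_on_def by simp
      ultimately have "x \<notin> A i" using x by blast
      then show ?thesis using i by blast
    qed (use x in blast)
  qed
  then have "measure M (A k - disjointed F k) \<le> measure M ((A k - F k) \<union> (\<Union>i<k. F i - A i))"
    using assms(2,3) by (intro finite_measure_mono) auto
  also have "\<dots> \<le> measure M (A k - F k) + measure M (\<Union>i<k. F i - A i)"
    using assms(2,3) by (intro measure_Un_le) auto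
  also have "measure M (\<Union>i<k. F i - A i) \<le> (\<Sum>i<k. measure M (F i - A i))"
    using assms(2,3) by (intro finite_measure_subadditive_finite) auto
  also have "\<dots> \<le> (\<Sum>i<k. \<eta>)"
  proof (rule sum_mono)
    fix i assume "i \<in> {..<k}"
    then have "measure M (F i - A i) \<le> measure M (sym_diff (A i) (F i))"
      using assms(2,3) by (intro finite_measure_mono) auto
    then show "measure M (F i - A i) \<le> \<eta>" using assms(4)[of i] \<open>i \<in> {..<k}\<close> by simp
  qed
  also have "measure M (A k - F k) \<le> \<eta>"
    using assms(2,3) assms(4)[of k] finite_measure_mono[of "A k - F k" "sym_diff (A k) (F k)"] by auto
  finally show ?thesis by (simp add: algebra_simps)
qed

lemma small_diameter_partition:
  assumes ms: "Metric_space (space M) d"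
    and sep: "separable_space (Metric_space.mtopology (space M) d)"
    and balls: "\<forall>x\<in>space M. \<forall>r. Metric_space.mball (space M) d x r \<in> sets M"
    and prob: "prob_space M" and "\<epsilon> > 0" "\<delta> > 0"
  obtains C :: "nat \<Rightarrow> 'a set" and K :: nat
  where "\<And>k. C k \<in> sets M" "disjoint_family C" "\<And>k x y. x \<in> C k \<Longrightarrow> y \<in> C k \<Longrightarrow> d x y < \<epsilon>"
    "measure M (space M - (\<Union>k<K. C k)) < \<delta>"
proof -
  interpret Metric_space "space M" d by (rule ms)
  interpret PM: prob_space M by (rule prob)
  obtain D where D: "countable D" "D \<subseteq> space M" "mtopology closure_of D = space M"
    using sep unfolding separable_space_def by auto
  have "D \<noteq> {}" using D(3) PM.not_empty by auto
  define c where "c = from_nat_into D"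
  have c: "c k \<in> space M" for k unfolding c_def using from_nat_into[OF \<open>D \<noteq> {}\<close>] D(2) by auto
  define C where "C = disjointed (\<lambda>k. mball (c k) (\<epsilon> / 2))"
  have C_sets: "C k \<in> sets M" for k
    unfolding C_def using sets.range_disjointed_sets[of "\<lambda>k. mball (c k) (\<epsilon> / 2)"] balls c by auto
  have "(\<Union>k. C k) = space M"
  proof
    show "(\<Union>k. C k) \<subseteq> space M" using C_sets sets.sets_into_space by blast
    show "space M \<subseteq> (\<Union>k. C k)"
    proof
      fix x assume x: "x \<in> space M"
      then have "\<forall>r>0. \<exists>y\<in>D. y \<in> mball x r" using D(3) unfolding metric_closure_of by auto
      then obtain y where "y \<in> D" "y \<in> mball x (\<epsilon> / 2)" using \<open>\<epsilon> > 0\<close> by (meson half_gt_zero)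
      moreover obtain k where "c k = y" unfolding c_def using from_nat_into_surj[OF D(1) \<open>y \<in> D\<close>] by auto
      ultimately have "x \<in> mball (c k) (\<epsilon> / 2)" using commute by auto
      then show "x \<in> (\<Union>k. C k)" unfolding C_def UN_disjointed_eq by auto
    qed
  qed
  moreover have "(\<Union>K. \<Union>k<K. C k) = (\<Union>k. C k)" by blast
  moreover have "(\<lambda>K. measure M (\<Union>k<K. C k)) \<longlonglongrightarrow> measure M (\<Union>K. \<Union>k<K. C k)"
    using C_sets by (intro PM.finite_Lim_measure_incseq) (force simp: incseq_def)+
  ultimately have "(\<lambda>K. measure M (\<Union>k<K. C k)) \<longlonglongrightarrow> measure M (space M)" by simp
  then have "eventually (\<lambda>K. 1 - \<delta> < measure M (\<Union>k<K. C k)) sequentially"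
    using \<open>\<delta> > 0\<close> PM.prob_space by (intro order_tendstoD(1)) auto
  then obtain K where K: "1 - \<delta> < measure M (\<Union>k<K. C k)" by (auto simp: eventually_sequentially)
  show ?thesis
  proof
    show "C k \<in> sets M" for k by (rule C_sets)
    show "disjoint_family C" unfolding C_def by (rule disjoint_family_disjointed)
    show "d x y < \<epsilon>" if "x \<in> C k" "y \<in> C k" for k x y
    proof -
      have "C k \<subseteq> mball (c k) (\<epsilon> / 2)" unfolding C_def by (rule disjointed_subset)
      then have "x \<in> mball (c k) (\<epsilon> / 2)" "y \<in> mball (c k) (\<epsilon> / 2)" using that by auto
      then show ?thesis using triangle[of x "c k" y] commute by auto
    qed
    show "measure M (space M - (\<Union>k<K. C k)) < \<delta>"
      using K C_sets PM.finite_measure_compl[of "\<Union>k<K. C k"] PM.prob_space by auto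
  qed
qed

section \<open>A measure-preserving copy of the Bernoulli shift\<close>

locale bernoulli_copy = bernoulli_shift P Z S NB
  for P :: "'w measure" and Z :: "int \<Rightarrow> 'w \<Rightarrow> 'b" and S :: "'b set" and NB :: "(int \<Rightarrow> 'b) measure" +
  fixes M :: "'a measure" and psi :: "'a \<Rightarrow> int \<Rightarrow> 'b" and H1 :: "'a set" and H2 :: "(int \<Rightarrow> 'b) set"
  assumes prob_space_M: "prob_space M"
    and H1: "H1 \<in> sets M" and H2: "H2 \<in> sets NB"
    and H1_null: "emeasure M (space M - H1) = 0" and H2_null: "emeasure NB (space NB - H2) = 0"
    and bij: "bij_betw psi H1 H2"
    and image_in_sets: "\<forall>A\<in>sets M. A \<subseteq> H1 \<longrightarrow> psi ` A \<in> sets NB"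
    and preimage_in_sets: "\<forall>B\<in>sets NB. B \<subseteq> H2 \<longrightarrow> {x\<in>H1. psi x \<in> B} \<in> sets M"
    and emeasure_image: "\<forall>A\<in>sets M. A \<subseteq> H1 \<longrightarrow> emeasure NB (psi ` A) = emeasure M A"
begin

lemma psi_in_H2: "x \<in> H1 \<Longrightarrow> psi x \<in> H2"
  using bij by (auto simp: bij_betw_def)

lemma inj_on_psi: "inj_on psi H1"
  using bij by (auto simp: bij_betw_def)

lemma psi_image_H1: "psi ` H1 = H2"
  using bij by (auto simp: bij_betw_def)

lemma finite_measure_M: "finite_measure M"
  using prob_space_M by (rule prob_space.finite_measure)

lemma psi_preimage_in_sets: "X \<in> sets NB \<Longrightarrow> {m\<in>H1. psi m \<in> X} \<in> sets M"
proof -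
  assume X: "X \<in> sets NB"
  have "{m\<in>H1. psi m \<in> X} = {m\<in>H1. psi m \<in> X \<inter> H2}" using psi_in_H2 by auto
  moreover have "X \<inter> H2 \<in> sets NB" using X H2 by auto
  ultimately show ?thesis using preimage_in_sets by auto
qed

lemma measure_psi_preimage:
  assumes X: "X \<in> sets NB"
  shows "measure M {m\<in>H1. psi m \<in> X} = measure NB X"
proof -
  have "psi ` {m\<in>H1. psi m \<in> X} = X \<inter> H2" using psi_image_H1 psi_in_H2 by auto
  then have "emeasure NB (X \<inter> H2) = emeasure M {m\<in>H1. psi m \<in> X}"
    using emeasure_image psi_preimage_in_sets[OF X] by (metis (no_types, lifting) mem_Collect_eq subsetI)
  then have "measure M {m\<in>H1. psi m \<in> X} = measure NB (X \<inter> H2)" by (simp add: measure_def)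
  also have "X \<inter> H2 = X - (space NB - H2)" using sets.sets_into_space[OF X] by auto
  also have "measure NB \<dots> = measure NB X"
    using H2 H2_null by (intro measure_Diff_null_set[OF X]) auto
  finally show ?thesis .
qed

lemma measure_psi_image: "A \<in> sets M \<Longrightarrow> A \<subseteq> H1 \<Longrightarrow> measure NB (psi ` A) = measure M A"
  using emeasure_image by (auto simp: measure_def)

definition regular :: "'a set" where "regular = {m\<in>H1. psi m \<in> typical}"

lemma regular_in_sets: "regular \<in> sets M"
  unfolding regular_def by (rule psi_preimage_in_sets[OF typical_in_sets])

lemma nonregular_null: "space M - regular \<in> null_sets M"
proof -
  have "space M - H1 \<in> null_sets M" using H1 H1_null by auto
  moreover have "{m\<in>H1. psi m \<in> space NB - typical} \<in> null_sets M"
  proof -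
    have "space NB - typical \<in> sets NB" "measure NB (space NB - typical) = 0"
      using atypical_null by (auto simp: null_sets_def measure_def)
    then show ?thesis
      using psi_preimage_in_sets[of "space NB - typical"] measure_psi_preimage[of "space NB - typical"]
      by (intro null_setsI) (simp_all add: finite_measure.emeasure_eq_measure[OF finite_measure_M])
  qed
  moreover have "space M - regular \<subseteq> (space M - H1) \<union> {m\<in>H1. psi m \<in> space NB - typical}"
    unfolding regular_def using psi_in_H2 sets.sets_into_space[OF H2] by auto
  moreover have "space M - regular \<in> sets M" using regular_in_sets by auto
  ultimately show ?thesis by (meson null_sets.Un null_sets_subset)
qed

lemma measure_nonregular: "measure M (space M - regular) = 0"
  using nonregular_null by (auto simp: null_sets_def measure_def)

lemma measure_singleton_eq_0:
  assumes "a \<in> support" "b \<in> support" "a \<noteq> b" and m: "m \<in> space M" "{m} \<in> sets M"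
  shows "measure M {m} = 0"
proof -
  interpret M: finite_measure M by (rule finite_measure_M)
  obtain q :: real where q: "q < 1"
    and cyl: "\<And>c k. measure NB {x\<in>space NB. \<forall>l\<in>{- int k..int k}. x l = c l} \<le> q ^ k"
    using measure_point_cylinder_le_power[OF assms(1-3)] by blast
  have bound: "measure M {m} \<le> q ^ k" for k
  proof (cases "m \<in> H1")
    case False
    then have "measure M {m} \<le> measure M (space M - H1)"
      using m H1 by (intro M.finite_measure_mono) auto
    also have "\<dots> = 0" using H1_null by (simp add: measure_def)
    finally show ?thesis using cyl[where c="psi m" and k=k] measure_nonneg[of NB] by (meson order.trans)
  next
    case True
    define X where "X = {x\<in>space NB. \<forall>l\<in>{- int k..int k}. x l = psi m l}"
    have X: "X \<in> sets NB"
      unfolding X_def using point_cylinder_in_sets[of "{- int k..int k}" S "psi m"]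
      by (simp add: sets_NB space_NB)
    have "{m} \<subseteq> {m'\<in>H1. psi m' \<in> X}"
      using True psi_in_H2 sets.sets_into_space[OF H2] unfolding X_def by auto
    then have "measure M {m} \<le> measure M {m'\<in>H1. psi m' \<in> X}"
      using psi_preimage_in_sets[OF X] by (rule M.finite_measure_mono)
    also have "\<dots> = measure NB X" by (rule measure_psi_preimage[OF X])
    finally show ?thesis using cyl[where c="psi m" and k=k] unfolding X_def by linarith
  qed
  have "0 \<le> q ^ 1"
    using cyl[where k=1 and c=undefined] measure_nonneg[of NB] by (rule order.trans[rotated])
  then have "0 \<le> q" by simp
  with q have "(\<lambda>k. q ^ k) \<longlonglongrightarrow> 0" by (intro LIMSEQ_realpow_zero) auto
  then have "measure M {m} \<le> 0" using bound by (intro LIMSEQ_le_const) auto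
  then show ?thesis using measure_nonneg[of M "{m}"] by linarith
qed

lemma exists_inj_code:
  fixes Q :: "(int \<Rightarrow> 'b) \<Rightarrow> 'a set"
  assumes "finite J"
    and Q: "\<And>w. w \<in> PiE J (\<lambda>_. support) \<Longrightarrow> Q w \<in> sets M \<and> measure M (Q w) > 0"
    and ms: "Metric_space (space M) d"
    and balls: "\<forall>x\<in>space M. \<forall>r. Metric_space.mball (space M) d x r \<in> sets M"
  obtains g where "inj_on g (PiE J (\<lambda>_. support))" "\<And>w. w \<in> PiE J (\<lambda>_. support) \<Longrightarrow> g w \<in> Q w"
proof (cases "\<exists>a\<in>support. \<exists>b\<in>support. a \<noteq> b")
  case True
  then obtain a b where ab: "a \<in> support" "b \<in> support" "a \<noteq> b" by blast
  have "\<And>m. m \<in> space M \<Longrightarrow> {m} \<in> sets M \<and> measure M {m} = 0"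
    using singleton_in_sets[OF ms balls] measure_singleton_eq_0[OF ab] by blast
  then have "infinite (Q w)" if "w \<in> PiE J (\<lambda>_. support)" for w
    using Q[OF that] finite_measure.infinite_if_measure_pos[OF finite_measure_M] by blast
  then show ?thesis
    using inj_on_choice[of "PiE J (\<lambda>_. support)" Q] assms(1) finite_support that
    by (auto simp: finite_PiE)
next
  case False
  then obtain a where "support = {a}" using support_nonempty by blast
  then have "PiE J (\<lambda>_. support) = {restrict (\<lambda>_. a) J}"
    by (auto simp: PiE_iff extensional_def restrict_def fun_eq_iff)
  moreover have "Q w \<noteq> {}" if "w \<in> PiE J (\<lambda>_. support)" for w
    using Q[OF that] by (metis measure_empty less_irrefl)
  ultimately show ?thesis by (intro that[of "\<lambda>w. SOME x. x \<in> Q w"]) (auto simp: some_in_eq)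
qed

end

context bernoulli_copy
begin

lemma measure_outside_cells_le:
  fixes K :: nat and \<eta> :: real
  assumes C: "\<And>k. C k \<in> sets M" "disjoint_family C"
    and F: "\<And>k. k < K \<Longrightarrow> F k \<in> sets NB"
      "\<And>k. k < K \<Longrightarrow> measure NB (sym_diff (psi ` (C k \<inter> regular)) (F k)) \<le> \<eta>"
  shows "measure M (space M - (\<Union>k<K. C k \<inter> {m\<in>regular. psi m \<in> disjointed F k}))
       \<le> measure M (space M - (\<Union>k<K. C k)) + real K * (real K * \<eta>)"
proof -
  interpret MM: finite_measure M by (rule finite_measure_M)
  interpret NBm: prob_space NB by (rule prob_space_NB)
  define A where "A k = psi ` (C k \<inter> regular)" for k
  have A_sets: "A k \<in> sets NB" for k
  proof -
    have "C k \<inter> regular \<in> sets M" "C k \<inter> regular \<subseteq> H1"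
      using C(1) regular_in_sets unfolding regular_def by auto
    then show ?thesis unfolding A_def using image_in_sets by blast
  qed
  have "disjoint_family A"
    unfolding A_def disjoint_family_on_def
  proof (intro ballI impI)
    fix i j :: nat assume "i \<noteq> j"
    then have "C i \<inter> C j = {}" using C(2) unfolding disjoint_family_on_def by simp
    then show "psi ` (C i \<inter> regular) \<inter> psi ` (C j \<inter> regular) = {}"
      using inj_on_psi unfolding regular_def inj_on_def by blast
  qed
  have diff_sets: "A k - disjointed F k \<in> sets NB" if "k < K" for k
    using A_sets F(1) that by (auto simp: disjointed_def)
  have diff_le: "measure NB (A k - disjointed F k) \<le> real K * \<eta>" if "k < K" for k
  proof -
    have "measure NB (A k - disjointed F k) \<le> real (Suc k) * \<eta>"
      using \<open>disjoint_family A\<close> A_sets F that unfolding A_def by (intro NBm.measure_Diff_disjointed_le) auto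
    moreover have "0 \<le> \<eta>" using F(2)[OF that] measure_nonneg[of NB] by (meson order.trans)
    ultimately show ?thesis using that by (meson Suc_leI of_nat_le_iff mult_right_mono order.trans)
  qed
  define R where "R = (\<Union>k<K. {m\<in>H1. psi m \<in> A k - disjointed F k})"
  have R: "R \<in> sets M"
    unfolding R_def using psi_preimage_in_sets[OF diff_sets] by (intro sets.finite_UN) auto
  have "space M - (\<Union>k<K. C k \<inter> {m\<in>regular. psi m \<in> disjointed F k})
      \<subseteq> (space M - (\<Union>k<K. C k)) \<union> (space M - regular) \<union> R"
    unfolding R_def A_def regular_def by blast
  then have "measure M (space M - (\<Union>k<K. C k \<inter> {m\<in>regular. psi m \<in> disjointed F k}))
      \<le> measure M ((space M - (\<Union>k<K. C k)) \<union> (space M - regular) \<union> R)"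
    using C(1) regular_in_sets R by (intro MM.finite_measure_mono) auto
  also have "\<dots> \<le> measure M (space M - (\<Union>k<K. C k)) + measure M (space M - regular) + measure M R"
    using C(1) regular_in_sets R measure_Un_le[of "space M - (\<Union>k<K. C k)" M "space M - regular"]
      measure_Un_le[of "(space M - (\<Union>k<K. C k)) \<union> (space M - regular)" M R]
    by auto
  also have "measure M R \<le> (\<Sum>k<K. measure M {m\<in>H1. psi m \<in> A k - disjointed F k})"
    unfolding R_def using psi_preimage_in_sets[OF diff_sets] by (intro MM.finite_measure_subadditive_finite) auto
  also have "\<dots> = (\<Sum>k<K. measure NB (A k - disjointed F k))"
    by (intro sum.cong refl measure_psi_preimage diff_sets) simp
  also have "\<dots> \<le> (\<Sum>k<K. real K * \<eta>)" using diff_le by (intro sum_mono) auto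
  finally show ?thesis using measure_nonregular by simp
qed

end

context bernoulli_copy
begin

lemma exists_code_into_cells:
  fixes K :: nat and W :: "int set"
  assumes "finite W"
    and ms: "Metric_space (space M) d"
    and balls: "\<forall>x\<in>space M. \<forall>r. Metric_space.mball (space M) d x r \<in> sets M"
    and C: "\<And>k. C k \<in> sets M"
    and G: "\<And>k. k < K \<Longrightarrow> determined_by S W (G k)" "disjoint_family G"
    and pos: "\<And>k. k < K \<Longrightarrow> G k \<noteq> {} \<Longrightarrow> measure M (C k) > 0"
  obtains g where "inj_on g (PiE W (\<lambda>_. support))" "g ` PiE W (\<lambda>_. support) \<subseteq> space M"
    "\<And>k x. k < K \<Longrightarrow> x \<in> G k \<Longrightarrow> restrict x W \<in> PiE W (\<lambda>_. support) \<Longrightarrow>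
       g (restrict x W) \<in> C k"
proof -
  interpret MM: prob_space M by (rule prob_space_M)
  define hit where "hit w k \<longleftrightarrow> k < K \<and> (\<exists>x\<in>G k. restrict x W = w)" for w k
  have hit_unique: "j = k" if j: "hit w j" and k: "hit w k" for w j k
  proof (rule ccontr)
    obtain x y where x: "j < K" "x \<in> G j" "restrict x W = w" and y: "k < K" "y \<in> G k" "restrict y W = w"
      using j k unfolding hit_def by blast
    have "y \<in> space (seq_space S)" using y(2) determined_by_subset_space[OF G(1)[OF y(1)]] by blast
    then have "y \<in> G j" using determined_by_restrict[OF G(1)[OF x(1)] x(2)] x(3) y(3) by simp
    moreover assume "j \<noteq> k"
    then have "G j \<inter> G k = {}" using G(2) unfolding disjoint_family_on_def by simp
    ultimately show False using y(2) by blast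
  qed
  define Q where "Q w = (if \<exists>k. hit w k then C (LEAST k. hit w k) else space M)" for w
  have Q: "Q w \<in> sets M \<and> measure M (Q w) > 0" for w
  proof (cases "\<exists>k. hit w k")
    case True
    have "hit w (LEAST k. hit w k)" using True by (rule LeastI_ex)
    then have "measure M (C (LEAST k. hit w k)) > 0" using pos unfolding hit_def by blast
    then show ?thesis using True C unfolding Q_def by simp
  next
    case False
    then have "Q w = space M" unfolding Q_def by auto
    then show ?thesis using MM.prob_space by simp
  qed
  obtain g where g: "inj_on g (PiE W (\<lambda>_. support))" "\<And>w. w \<in> PiE W (\<lambda>_. support) \<Longrightarrow> g w \<in> Q w"
    by (rule exists_inj_code[of W Q d, OF _ _ ms balls]) (auto simp: \<open>finite W\<close> Q)
  show ?thesis
  proof (rule that[OF g(1)])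
    have "Q w \<subseteq> space M" for w using Q[of w] sets.sets_into_space[of "Q w" M] by simp
    then show "g ` PiE W (\<lambda>_. support) \<subseteq> space M" using g(2) by auto
    fix k x assume k: "k < K" "x \<in> G k" and x: "restrict x W \<in> PiE W (\<lambda>_. support)"
    have hit: "hit (restrict x W) k" unfolding hit_def using k by blast
    have "(LEAST j. hit (restrict x W) j) = k"
    proof (rule Least_equality)
      show "k \<le> j" if "hit (restrict x W) j" for j using hit_unique[OF that hit] by simp
    qed (rule hit)
    then have "Q (restrict x W) = C k" using hit unfolding Q_def by (metis (mono_tags))
    then show "g (restrict x W) \<in> C k" using g(2)[OF x] by simp
  qed
qed

lemma exists_close_block_code:
  assumes ms: "Metric_space (space M) d"
    and sep: "separable_space (Metric_space.mtopology (space M) d)"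
    and balls: "\<forall>x\<in>space M. \<forall>r. Metric_space.mball (space M) d x r \<in> sets M"
    and "\<epsilon> > 0"
  obtains n :: nat and g :: "(int \<Rightarrow> 'b) \<Rightarrow> 'a" and E where
    "inj_on g (PiE {- int n..int n} (\<lambda>_. support))" "g ` PiE {- int n..int n} (\<lambda>_. support) \<subseteq> space M"
    "E \<in> sets M" "measure M E < \<epsilon>"
    "\<And>m. m \<in> space M - E \<Longrightarrow> m \<in> regular \<and> d m (g (restrict (psi m) {- int n..int n})) < \<epsilon>"
proof -
  obtain C and K :: nat where C: "\<And>k. C k \<in> sets M" "disjoint_family C"
      "\<And>k x y. x \<in> C k \<Longrightarrow> y \<in> C k \<Longrightarrow> d x y < \<epsilon>"
    and cover: "measure M (space M - (\<Union>k<K. C k)) < \<epsilon> / 2"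
  proof -
    from small_diameter_partition[OF ms sep balls prob_space_M \<open>\<epsilon> > 0\<close> half_gt_zero[OF \<open>\<epsilon> > 0\<close>]]
    show thesis using that by metis
  qed
  define \<eta> where "\<eta> = \<epsilon> / (2 * (real K * real K + 1))"
  have K: "0 < 2 * (real K * real K + 1)" by (intro mult_pos_pos add_nonneg_pos) auto
  then have "\<eta> > 0" unfolding \<eta>_def using \<open>\<epsilon> > 0\<close> by (intro divide_pos_pos)
  have "real K * (real K * \<eta>) = \<epsilon> / 2 * (real K * real K / (real K * real K + 1))"
    unfolding \<eta>_def using K by (simp add: field_simps)
  also have "\<dots> < \<epsilon> / 2 * 1" using \<open>\<epsilon> > 0\<close> K by (intro mult_strict_left_mono) auto
  finally have K\<eta>: "real K * (real K * \<eta>) < \<epsilon> / 2" by simp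
  define A where "A k = psi ` (C k \<inter> regular)" for k
  have CR: "C k \<inter> regular \<in> sets M" "C k \<inter> regular \<subseteq> H1" for k
    using C(1) regular_in_sets unfolding regular_def by auto
  have A_sets: "A k \<in> sets NB" for k unfolding A_def using image_in_sets CR by blast
  obtain n F where F_det: "\<And>k. k < K \<Longrightarrow> determined_by S {- int n..int n} (F k)"
    and F_err: "\<And>k. k < K \<Longrightarrow> measure NB (sym_diff (A k) (F k)) < \<eta>"
    and F_null: "\<And>k. k < K \<Longrightarrow> measure NB (A k) = 0 \<Longrightarrow> F k = {}"
    using window_approximation[of K A \<eta>] A_sets \<open>\<eta> > 0\<close> by blast
  define W where "W = {- int n..int n}"
  have F_sets: "F k \<in> sets NB" if "k < K" for k
    using determined_by_in_sets_NB[OF _ F_det[OF that]] by simp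
  have G_sets: "disjointed F k \<in> sets NB" if "k < K" for k
    using F_sets that by (auto simp: disjointed_def)
  have G_det: "determined_by S W (disjointed F k)" if "k < K" for k
    unfolding disjointed_def W_def using that
    by (intro determined_by_Diff F_det determined_by_UN) auto
  have pos: "measure M (C k) > 0" if "k < K" "disjointed F k \<noteq> {}" for k
  proof -
    have "F k \<noteq> {}" using that(2) disjointed_subset[of F k] by blast
    then have "measure M (C k \<inter> regular) \<noteq> 0"
      using F_null[OF that(1)] measure_psi_image[OF CR] unfolding A_def by metis
    moreover have "measure M (C k \<inter> regular) \<le> measure M (C k)"
      using C(1) by (intro finite_measure.finite_measure_mono[OF finite_measure_M]) auto
    ultimately show ?thesis using measure_nonneg[of M "C k \<inter> regular"] by linarith
  qed
  obtain g where g: "inj_on g (PiE W (\<lambda>_. support))" "g ` PiE W (\<lambda>_. support) \<subseteq> space M"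
    and g_cell: "\<And>k x. k < K \<Longrightarrow> x \<in> disjointed F k \<Longrightarrow> restrict x W \<in> PiE W (\<lambda>_. support)
      \<Longrightarrow> g (restrict x W) \<in> C k"
  proof (rule exists_code_into_cells[where K=K and W=W and C=C and G="disjointed F",
        OF _ ms balls C(1) G_det disjoint_family_disjointed pos])
    show "finite W" by (simp add: W_def)
  qed (assumption | blast)+
  define E where "E = space M - (\<Union>k<K. C k \<inter> {m\<in>regular. psi m \<in> disjointed F k})"
  have "C k \<inter> {m\<in>regular. psi m \<in> disjointed F k} \<in> sets M" if "k < K" for k
  proof -
    have "{m\<in>H1. psi m \<in> typical \<inter> disjointed F k} \<in> sets M"
      using typical_in_sets G_sets[OF that] by (intro psi_preimage_in_sets) auto
    moreover have "{m\<in>regular. psi m \<in> disjointed F k} = {m\<in>H1. psi m \<in> typical \<inter> disjointed F k}"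
      unfolding regular_def by auto
    ultimately show ?thesis using C(1) by auto
  qed
  then have "E \<in> sets M" unfolding E_def by auto
  have "measure M E \<le> measure M (space M - (\<Union>k<K. C k)) + real K * (real K * \<eta>)"
    unfolding E_def using C F_sets F_err
    by (intro measure_outside_cells_le) (auto simp: A_def less_imp_le)
  then have "measure M E < \<epsilon>" using cover K\<eta> by linarith
  have "m \<in> regular \<and> d m (g (restrict (psi m) W)) < \<epsilon>" if m: "m \<in> space M - E" for m
  proof -
    obtain k where k: "k < K" "m \<in> C k" "m \<in> regular" "psi m \<in> disjointed F k"
      using m unfolding E_def by auto
    have "restrict (psi m) W \<in> PiE W (\<lambda>_. support)" using k(3) unfolding regular_def typical_def by auto
    then have "g (restrict (psi m) W) \<in> C k" using g_cell k(1,4) by blast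
    then show ?thesis using C(3)[OF k(2)] k(3) by simp
  qed
  then show ?thesis using that[of g n E] g \<open>E \<in> sets M\<close> \<open>measure M E < \<epsilon>\<close> unfolding W_def by blast
qed

end

section \<open>The coded copy is isomorphic to the coded process\<close>

locale coded_copy = bernoulli_copy P Z S NB M psi H1 H2 + block_code P Z S NB n g
  for P :: "'w measure" and Z :: "int \<Rightarrow> 'w \<Rightarrow> 'b" and S :: "'b set" and NB :: "(int \<Rightarrow> 'b) measure"
    and M :: "'a measure" and psi :: "'a \<Rightarrow> int \<Rightarrow> 'b" and H1 :: "'a set" and H2 :: "(int \<Rightarrow> 'b) set"
    and n :: nat and g :: "(int \<Rightarrow> 'b) \<Rightarrow> 'a" +
  fixes T :: "'a \<Rightarrow> 'a"
  assumes T_H1: "T ` H1 \<subseteq> H1" and psi_T: "\<forall>x\<in>H1. psi (T x) = shift (psi x)"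
begin

definition phi :: "'a \<Rightarrow> int \<Rightarrow> 'a" where "phi m = coding (psi m)"

lemma phi_image_in_sets:
  assumes "A \<in> sets M" "A \<subseteq> regular"
  shows "phi ` A \<in> sets N"
proof -
  have "psi ` A \<in> sets NB" using image_in_sets assms unfolding regular_def by auto
  moreover have "psi ` A \<subseteq> typical" using assms(2) unfolding regular_def by auto
  ultimately have "coding ` (psi ` A) \<in> sets (seq_space alphabet)" by (rule coding_image_in_sets)
  then show ?thesis by (simp add: sets_N phi_def image_image)
qed

lemma emeasure_phi_image:
  assumes A: "A \<in> sets M" "A \<subseteq> regular"
  shows "emeasure N (phi ` A) = emeasure M A"
proof -
  have psi_A: "psi ` A \<in> sets NB" using image_in_sets A unfolding regular_def by auto
  have psi_A_typical: "psi ` A \<subseteq> typical" using A(2) unfolding regular_def by auto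
  have img: "coding ` (psi ` A) \<in> sets (seq_space alphabet)" by (rule coding_image_in_sets[OF psi_A psi_A_typical])
  have "measure N (phi ` A) = measure NB (coding -` (coding ` (psi ` A)) \<inter> space NB)"
    unfolding phi_def N_def image_image[symmetric] by (rule measure_distr[OF measurable_coding img])
  also have "\<dots> = measure NB (coding -` (coding ` (psi ` A)) \<inter> space NB \<inter> typical)"
    by (rule measure_Int_typical[symmetric]) (rule measurable_sets[OF measurable_coding img])
  also have "\<dots> = measure NB (psi ` A)" by (simp add: coding_preimage_image[OF psi_A_typical])
  also have "\<dots> = measure M A" using A unfolding regular_def by (intro measure_psi_image) auto
  finally show ?thesis
    using finite_measure.emeasure_eq_measure[OF finite_measure_M]
      finite_measure.emeasure_eq_measure[OF prob_space.finite_measure[OF prob_space_N]]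
    by simp
qed

lemma phi_0: "m \<in> regular \<Longrightarrow> phi m 0 = g (restrict (psi m) {- int n..int n})"
  unfolding phi_def regular_def by (simp add: coding_typical block_def W_def)

lemma phi_T: "x \<in> regular \<Longrightarrow> phi (T x) = shift (phi x)"
  unfolding phi_def regular_def using psi_T by (auto simp: coding_shift)

lemma T_regular: "T ` regular \<subseteq> regular"
  unfolding regular_def using T_H1 psi_T typical_shift by auto

lemma inj_on_phi: "inj_on phi regular"
proof (rule inj_onI)
  fix x y assume xy: "x \<in> regular" "y \<in> regular" "phi x = phi y"
  then have "psi x = psi y" unfolding phi_def regular_def using inj_on_coding by (auto dest: inj_onD)
  then show "x = y" using xy inj_on_psi unfolding regular_def by (auto dest: inj_onD)
qed

lemma null_outside_phi_image: "emeasure N (space N - phi ` regular) = 0"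
proof -
  have img: "phi ` regular \<in> sets (seq_space alphabet)"
    using phi_image_in_sets[OF regular_in_sets subset_refl] sets_N by auto
  have "coding -` (space (seq_space alphabet) - phi ` regular) \<inter> space NB
      \<subseteq> (space NB - typical) \<union> (space NB - H2)"
  proof
    fix x assume x: "x \<in> coding -` (space (seq_space alphabet) - phi ` regular) \<inter> space NB"
    show "x \<in> (space NB - typical) \<union> (space NB - H2)"
    proof (rule ccontr)
      assume "\<not> ?thesis"
      then have "x \<in> typical" "x \<in> H2" using x by auto
      moreover obtain m where "m \<in> H1" "psi m = x" using \<open>x \<in> H2\<close> psi_image_H1 by auto
      ultimately have "coding x \<in> phi ` regular" unfolding phi_def regular_def by auto
      then show False using x by auto
    qed
  qed
  moreover have "(space NB - typical) \<union> (space NB - H2) \<in> null_sets NB"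
    using atypical_null H2 H2_null by auto
  moreover have "coding -` (space (seq_space alphabet) - phi ` regular) \<inter> space NB \<in> sets NB"
    using measurable_sets[OF measurable_coding, of "space (seq_space alphabet) - phi ` regular"] img by auto
  ultimately have "emeasure NB (coding -` (space (seq_space alphabet) - phi ` regular) \<inter> space NB) = 0"
    using null_sets_subset by blast
  then show ?thesis unfolding N_def using img by (simp add: emeasure_distr[OF measurable_coding])
qed

lemma mp_isomorphic_phi: "mp_isomorphic_via M T N shift phi"
  unfolding mp_isomorphic_via_def
proof (intro exI conjI ballI impI)
  show "regular \<in> sets M" by (rule regular_in_sets)
  show "phi ` regular \<in> sets N" by (rule phi_image_in_sets[OF regular_in_sets subset_refl])
  show "emeasure M (space M - regular) = 0" using nonregular_null by auto
  show "emeasure N (space N - phi ` regular) = 0" by (rule null_outside_phi_image)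
  show "T ` regular \<subseteq> regular" by (rule T_regular)
  show "shift ` phi ` regular \<subseteq> phi ` regular"
    using phi_T T_regular by (force simp: image_iff)
  show "bij_betw phi regular (phi ` regular)" using inj_on_phi by (simp add: bij_betw_def)
  fix A assume "A \<in> sets M" "A \<subseteq> regular"
  then show "phi ` A \<in> sets N" "emeasure N (phi ` A) = emeasure M A"
    by (rule phi_image_in_sets, rule emeasure_phi_image)
next
  fix B assume "B \<in> sets N" "B \<subseteq> phi ` regular"
  then have X: "typical \<inter> (coding -` B \<inter> space NB) \<in> sets NB"
    using typical_in_sets measurable_sets[OF measurable_coding, of B] sets_N by auto
  have "{x\<in>regular. phi x \<in> B} = {m\<in>H1. psi m \<in> typical \<inter> (coding -` B \<inter> space NB)}"
    unfolding regular_def phi_def typical_def by auto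
  then show "{x\<in>regular. phi x \<in> B} \<in> sets M" using psi_preimage_in_sets[OF X] by simp
next
  fix x assume "x \<in> regular"
  then show "phi (T x) = shift (phi x)" by (rule phi_T)
qed

lemma det_rep_N: "det_rep N (\<lambda>t m. m t) alphabet N"
  unfolding det_rep_def
proof (intro conjI allI impI)
  show "sets N = sets (seq_space alphabet)" by (rule sets_N)
  fix I :: "int set" and A :: "int \<Rightarrow> 'a set"
  have "cylinder alphabet I A = {\<omega>\<in>space N. \<forall>i\<in>I. \<omega> i \<in> A i}"
    unfolding cylinder_def space_N by simp
  then show "emeasure N (cylinder alphabet I A) = emeasure N {\<omega>\<in>space N. \<forall>i\<in>I. \<omega> i \<in> A i}" by simp
qed

end

theorem theorem2:
  fixes M :: "'a measure" and T :: "'a \<Rightarrow> 'a" and d :: "'a \<Rightarrow> 'a \<Rightarrow> real"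
    and P :: "'w measure" and Z :: "int \<Rightarrow> 'w \<Rightarrow> 'b" and S :: "'b set"
    and NB :: "(int \<Rightarrow> 'b) measure" and \<psi> :: "'a \<Rightarrow> (int \<Rightarrow> 'b)"
    and \<epsilon> :: real
  assumes sys: "mp_system M T"
    and bern: "bernoulli_process P Z S" "det_rep P Z S NB"
    and iso: "mp_isomorphic_via M T NB shift \<psi>"
    and metric: "Metric_space (space M) d"
    and separable: "separable_space (Metric_space.mtopology (space M) d)"
    and balls: "\<forall>x\<in>space M. \<forall>r. Metric_space.mball (space M) d x r \<in> sets M"
    and eps: "\<epsilon> > 0"
  shows "\<exists>(S' :: 'a set) (N :: (int \<Rightarrow> 'a) measure).
           S' \<subseteq> space M \<and> finite S'
         \<and> markov_process N (\<lambda>t m. m t) S'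
         \<and> irreducible_proc N (\<lambda>t m. m t) S' \<and> aperiodic_proc N (\<lambda>t m. m t) S'
         \<and> det_rep N (\<lambda>t m. m t) S' N
         \<and> eps_congruent M T d N \<epsilon>"
proof -
  obtain H1 H2 where H: "H1 \<in> sets M" "H2 \<in> sets NB"
    "emeasure M (space M - H1) = 0" "emeasure NB (space NB - H2) = 0"
    "T ` H1 \<subseteq> H1" "shift ` H2 \<subseteq> H2" "bij_betw \<psi> H1 H2"
    "\<forall>A\<in>sets M. A \<subseteq> H1 \<longrightarrow> \<psi> ` A \<in> sets NB"
    "\<forall>B\<in>sets NB. B \<subseteq> H2 \<longrightarrow> {x\<in>H1. \<psi> x \<in> B} \<in> sets M"
    "\<forall>A\<in>sets M. A \<subseteq> H1 \<longrightarrow> emeasure NB (\<psi> ` A) = emeasure M A"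
    "\<forall>x\<in>H1. \<psi> (T x) = shift (\<psi> x)"
    using iso unfolding mp_isomorphic_via_def by (elim exE conjE) (rule that; assumption)
  have "prob_space M" using sys unfolding mp_system_def by blast
  interpret B: bernoulli_copy P Z S NB M \<psi> H1 H2
    by (rule bernoulli_copy.intro[OF bernoulli_shift.intro[OF bern] bernoulli_copy_axioms.intro])
      (fact \<open>prob_space M\<close> H(1-4) H(7-10))+
  obtain g n E where g: "inj_on g (PiE {- int n..int n} (\<lambda>_. B.support))"
      "g ` PiE {- int n..int n} (\<lambda>_. B.support) \<subseteq> space M"
    and E: "E \<in> sets M" "measure M E < \<epsilon>"
      "\<And>m. m \<in> space M - E \<Longrightarrow> m \<in> B.regular \<and> d m (g (restrict (\<psi> m) {- int n..int n})) < \<epsilon>"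
    by (rule B.exists_close_block_code[OF metric separable balls eps]) (rule that; assumption)
  have "inj_on g (PiE {- int n..int n} (\<lambda>_. {s\<in>S. measure P {\<omega>\<in>space P. Z 0 \<omega> = s} > 0}))"
    using g(1) by (simp add: B.support_def B.p_def)
  then interpret C: coded_copy P Z S NB M \<psi> H1 H2 n g T
    by (intro coded_copy.intro B.bernoulli_copy_axioms coded_copy_axioms.intro
        block_code.intro[OF B.bernoulli_shift_axioms] block_code_axioms.intro H(5) H(11))
  have "d m (C.phi m 0) < \<epsilon>" if "m \<in> space M - E" for m
    using E(3)[OF that] C.phi_0 by simp
  then have "eps_congruent M T d C.N \<epsilon>"
    unfolding eps_congruent_def using C.mp_isomorphic_phi E(1,2) by blast
  moreover have "C.alphabet \<subseteq> space M" using g(2) unfolding C.alphabet_def C.blocks_def C.W_def .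
  ultimately show ?thesis
    using C.finite_alphabet C.markov_N C.irreducible_N C.aperiodic_N C.det_rep_N by blast
qed

end
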